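(* Let $\pi:V\to X$ be a finite-dimensional diffeological vector pseudo-bundle with a connection $\nabla$, and let $t\in C^\infty(X,(\Lambda^1(X))^* )$. Then the map $\nabla_t:C^\infty(X,V)\to C^\infty(X,V)$, $s\mapsto\nabla_ts$, is smooth for the functional diffeology on $C^\infty(X,V)$.
   Context: Diffeological spaces, smooth maps, and the functional diffeology on $C^\infty(A,B)$ ($q:U\to C^\infty(A,B)$ is a plot iff $(u,u')\mapsto q(u)(p(u'))$ is a plot of $B$ for every plot $p:U'\to A$) are as usual. A diffeological vector pseudo-bundle is a smooth surjection with vector space fibres whose fibrewise operations and zero section are smooth; tensor products carry the tensor product pseudo-bundle diffeology. The dual pseudo-bundle $W^*\to X$ of $W\to X$ has fibres the spaces of smooth linear functionals on the fibres, and a map $p:U\to W^*$ is a plot iff for every plot $q:U'\to W$ the map $(u,u')\mapsto p(u)(q(u'))$, defined where the base points agree, is smooth. $\Omega^1(X)$: a 1-form assigns to each plot $p:U\to X$ an ordinary 1-form $\omega(p)$ on $U$ with $\omega(p\circ F)=F^*\omega(p)$ for smooth $F$; functional diffeology. $\omega$ vanishes at $x$ if $\omega(p)(0)=0$ for all plots with $p(0)=x$. $\Lambda^1(X)$ is the quotient of $X\times\Omega^1(X)$ by the sub-bundle $\bigcup_x\{x\}\times\Omega^1_x(X)$ of vanishing forms, with quotient diffeology and projection $\pi^{\Omega,\Lambda}$. For smooth $h:X\to\mathbb{R}$, $dh$ is the section $x\mapsto\pi^{\Omega,\Lambda}(x,dh)$ with $dh(p)=d(h\circ p)$. A connection on $V$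 is a smooth linear operator $\nabla:C^\infty(X,V)\to C^\infty(X,\Lambda^1(X)\otimes V)$ with $\nabla(hs)=dh\otimes s+h\nabla s$. For $t\in C^\infty(X,(\Lambda^1(X))^* )$, the covariant derivative $\nabla_ts$ is the section $x\mapsto(t(x)\otimes\mathrm{Id})((\nabla s)(x))$, i.e. $\nabla s$ evaluated on $t$; it is a smooth section of $V$. *)

theory Defs
  imports "HOL-Analysis.Analysis"
begin

type_synonym pt = "nat \<Rightarrow> real"

text \<open>R^n is encoded as the points of nat => real vanishing from index n on;
  the product topology on nat => real restricts to the Euclidean topology there.\<close>
definition euclid :: "nat \<Rightarrow> pt set" where
  "euclid n = {x. \<forall>i\<ge>n. x i = 0}"

definition domain :: "nat \<Rightarrow> pt set \<Rightarrow> bool" where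
  "domain n U \<longleftrightarrow> U \<subseteq> euclid n \<and> openin (top_of_set (euclid n)) U"

definition pdiff :: "nat \<Rightarrow> (pt \<Rightarrow> real) \<Rightarrow> pt \<Rightarrow> real" where
  "pdiff i f x = deriv (\<lambda>h. f (x(i := x i + h))) 0"

fun ipdiff :: "nat list \<Rightarrow> (pt \<Rightarrow> real) \<Rightarrow> pt \<Rightarrow> real" where
  "ipdiff [] f = f"
| "ipdiff (i # is) f = pdiff i (ipdiff is f)"

definition smooth_fun :: "nat \<Rightarrow> pt set \<Rightarrow> (pt \<Rightarrow> real) \<Rightarrow> bool" where
  "smooth_fun n U f \<longleftrightarrow>
     (\<forall>is. set is \<subseteq> {..<n} \<longrightarrow> continuous_on U (ipdiff is f) \<and>
        (\<forall>i<n. \<forall>x\<in>U. (\<lambda>h. ipdiff is f (x(i := x i + h))) differentiable (at 0)))"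

definition smooth_map :: "nat \<Rightarrow> pt set \<Rightarrow> nat \<Rightarrow> pt set \<Rightarrow> (pt \<Rightarrow> pt) \<Rightarrow> bool" where
  "smooth_map m W n U F \<longleftrightarrow> F ` W \<subseteq> U \<and> (\<forall>i<n. smooth_fun m W (\<lambda>w. F w i))"

text \<open>Product U x U' of domains in R^(n+m): first n coordinates in U, next m in U'.\<close>
definition pfst :: "nat \<Rightarrow> pt \<Rightarrow> pt" where
  "pfst n z = (\<lambda>i. if i < n then z i else 0)"

definition psnd :: "nat \<Rightarrow> pt \<Rightarrow> pt" where
  "psnd n z = (\<lambda>i. z (i + n))"

definition dom_prod :: "nat \<Rightarrow> pt set \<Rightarrow> nat \<Rightarrow> pt set \<Rightarrow> pt set" where
  "dom_prod n U m W = {z \<in> euclid (n + m). pfst n z \<in> U \<and> psnd n z \<in> W}"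

type_synonym 'a plots = "nat \<Rightarrow> pt set \<Rightarrow> (pt \<Rightarrow> 'a) \<Rightarrow> bool"
type_synonym 'a dspace = "'a set \<times> 'a plots"

definition diffeological :: "'a dspace \<Rightarrow> bool" where
  "diffeological S \<longleftrightarrow>
     (\<forall>n U p. snd S n U p \<longrightarrow> domain n U \<and> p ` U \<subseteq> fst S) \<and>
     (\<forall>n U p q. snd S n U p \<and> (\<forall>u\<in>U. p u = q u) \<longrightarrow> snd S n U q) \<and>
     (\<forall>n U x. domain n U \<and> x \<in> fst S \<longrightarrow> snd S n U (\<lambda>_. x)) \<and>
     (\<forall>n U p. domain n U \<and> p ` U \<subseteq> fst S \<and>
        (\<forall>u\<in>U. \<exists>V. u \<in> V \<and> V \<subseteq> U \<and> domain n V \<and> snd S n V p) \<longrightarrow> snd S n U p) \<and>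
     (\<forall>n U p m W F. snd S n U p \<and> domain m W \<and> smooth_map m W n U F \<longrightarrow> snd S m W (p \<circ> F))"

definition real_ds :: "real dspace" where
  "real_ds = (UNIV, \<lambda>n U f. domain n U \<and> smooth_fun n U f)"

definition dsmooth :: "'a dspace \<Rightarrow> 'b dspace \<Rightarrow> ('a \<Rightarrow> 'b) \<Rightarrow> bool" where
  "dsmooth S T f \<longleftrightarrow> f ` fst S \<subseteq> fst T \<and> (\<forall>n U p. snd S n U p \<longrightarrow> snd T n U (f \<circ> p))"

definition subspace :: "'a dspace \<Rightarrow> 'a set \<Rightarrow> 'a dspace" where
  "subspace S A = (fst S \<inter> A, \<lambda>n U p. snd S n U p \<and> p ` U \<subseteq> A)"

definition prod_ds :: "'a dspace \<Rightarrow> 'b dspace \<Rightarrow> ('a \<times> 'b) dspace" where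
  "prod_ds S T = (fst S \<times> fst T, \<lambda>n U p. snd S n U (fst \<circ> p) \<and> snd T n U (snd \<circ> p))"

text \<open>C^infinity(A,B) with the functional diffeology (maps are taken extensional on A).\<close>
definition smooth_maps :: "'a dspace \<Rightarrow> 'b dspace \<Rightarrow> ('a \<Rightarrow> 'b) set" where
  "smooth_maps S T = {f. dsmooth S T f \<and> f \<in> extensional (fst S)}"

definition fun_ds :: "'a dspace \<Rightarrow> 'b dspace \<Rightarrow> ('a \<Rightarrow> 'b) dspace" where
  "fun_ds S T = (smooth_maps S T,
     \<lambda>n U q. domain n U \<and> q ` U \<subseteq> smooth_maps S T \<and>
       (\<forall>m W p. snd S m W p \<longrightarrow>
          snd T (n + m) (dom_prod n U m W) (\<lambda>z. q (pfst n z) (p (psnd n z)))))"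

record ('a, 'v) vpb =
  base :: "'a dspace"
  total :: "'v dspace"
  proj :: "'v \<Rightarrow> 'a"
  vadd :: "'v \<Rightarrow> 'v \<Rightarrow> 'v"
  vsmul :: "real \<Rightarrow> 'v \<Rightarrow> 'v"
  vzero :: "'a \<Rightarrow> 'v"

definition fibre :: "('a, 'v, 'z) vpb_scheme \<Rightarrow> 'a \<Rightarrow> 'v set" where
  "fibre E x = {v \<in> fst (total E). proj E v = x}"

definition vspace :: "'v set \<Rightarrow> ('v \<Rightarrow> 'v \<Rightarrow> 'v) \<Rightarrow> (real \<Rightarrow> 'v \<Rightarrow> 'v) \<Rightarrow> 'v \<Rightarrow> bool" where
  "vspace S add smul z \<longleftrightarrow> z \<in> S \<and> (\<forall>u\<in>S. \<forall>v\<in>S. add u v \<in> S) \<and> (\<forall>a. \<forall>v\<in>S. smul a v \<in> S) \<and>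
     (\<forall>u\<in>S. \<forall>v\<in>S. \<forall>w\<in>S. add (add u v) w = add u (add v w)) \<and>
     (\<forall>u\<in>S. \<forall>v\<in>S. add u v = add v u) \<and>
     (\<forall>v\<in>S. add z v = v) \<and> (\<forall>v\<in>S. add v (smul (-1) v) = z) \<and>
     (\<forall>a b. \<forall>v\<in>S. smul a (smul b v) = smul (a * b) v) \<and> (\<forall>v\<in>S. smul 1 v = v) \<and>
     (\<forall>a. \<forall>u\<in>S. \<forall>v\<in>S. smul a (add u v) = add (smul a u) (smul a v)) \<and>
     (\<forall>a b. \<forall>v\<in>S. smul (a + b) v = add (smul a v) (smul b v))"

fun lcomb :: "('v \<Rightarrow> 'v \<Rightarrow> 'v) \<Rightarrow> (real \<Rightarrow> 'v \<Rightarrow> 'v) \<Rightarrow> 'v \<Rightarrow> (real \<times> 'v) list \<Rightarrow> 'v" where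
  "lcomb add smul z [] = z"
| "lcomb add smul z ((a, v) # xs) = add (smul a v) (lcomb add smul z xs)"

definition fin_dim :: "'v set \<Rightarrow> ('v \<Rightarrow> 'v \<Rightarrow> 'v) \<Rightarrow> (real \<Rightarrow> 'v \<Rightarrow> 'v) \<Rightarrow> 'v \<Rightarrow> bool" where
  "fin_dim S add smul z \<longleftrightarrow>
     (\<exists>bs. set bs \<subseteq> S \<and> (\<forall>v\<in>S. \<exists>cs. length cs = length bs \<and> v = lcomb add smul z (zip cs bs)))"

definition fibred_prod :: "('a, 'v, 'z) vpb_scheme \<Rightarrow> ('a, 'w, 'y) vpb_scheme \<Rightarrow> ('v \<times> 'w) dspace" where
  "fibred_prod E F = subspace (prod_ds (total E) (total F)) {(v, w). proj E v = proj F w}"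

definition is_vpb :: "('a, 'v, 'z) vpb_scheme \<Rightarrow> bool" where
  "is_vpb E \<longleftrightarrow> diffeological (base E) \<and> diffeological (total E) \<and>
     dsmooth (total E) (base E) (proj E) \<and> proj E ` fst (total E) = fst (base E) \<and>
     (\<forall>x\<in>fst (base E). vspace (fibre E x) (vadd E) (vsmul E) (vzero E x)) \<and>
     dsmooth (fibred_prod E E) (total E) (\<lambda>uv. vadd E (fst uv) (snd uv)) \<and>
     dsmooth (prod_ds real_ds (total E)) (total E) (\<lambda>av. vsmul E (fst av) (snd av)) \<and>
     dsmooth (base E) (total E) (vzero E)"

definition fin_dim_vpb :: "('a, 'v, 'z) vpb_scheme \<Rightarrow> bool" where
  "fin_dim_vpb E \<longleftrightarrow> is_vpb E \<and>
     (\<forall>x\<in>fst (base E). fin_dim (fibre E x) (vadd E) (vsmul E) (vzero E x))"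

definition sections_ds :: "('a, 'v, 'z) vpb_scheme \<Rightarrow> ('a \<Rightarrow> 'v) dspace" where
  "sections_ds E = subspace (fun_ds (base E) (total E)) {s. \<forall>x\<in>fst (base E). proj E (s x) = x}"

text \<open>A 1-form assigns to each plot (n,U,p) the coefficient functions of an ordinary 1-form on U.\<close>
type_synonym 'a form = "nat \<Rightarrow> pt set \<Rightarrow> (pt \<Rightarrow> 'a) \<Rightarrow> pt \<Rightarrow> pt"

definition is_form :: "'a dspace \<Rightarrow> 'a form \<Rightarrow> bool" where
  "is_form S \<omega> \<longleftrightarrow>
     (\<forall>n U p. \<not> snd S n U p \<longrightarrow> \<omega> n U p = (\<lambda>u. undefined)) \<and>
     (\<forall>n U p. snd S n U p \<longrightarrow> (\<forall>u. u \<notin> U \<longrightarrow> \<omega> n U p u = undefined) \<and>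
        (\<forall>u\<in>U. \<omega> n U p u \<in> euclid n) \<and> (\<forall>i<n. smooth_fun n U (\<lambda>u. \<omega> n U p u i))) \<and>
     (\<forall>n U p q. snd S n U p \<and> (\<forall>u\<in>U. p u = q u) \<longrightarrow> \<omega> n U q = \<omega> n U p) \<and>
     (\<forall>n U p m W F. snd S n U p \<and> domain m W \<and> smooth_map m W n U F \<longrightarrow>
        (\<forall>w\<in>W. \<omega> m W (p \<circ> F) w =
           (\<lambda>j. if j < m then (\<Sum>i<n. \<omega> n U p (F w) i * pdiff j (\<lambda>v. F v i) w) else 0)))"

definition forms :: "'a dspace \<Rightarrow> 'a form set" where
  "forms S = {\<omega>. is_form S \<omega>}"

definition forms_ds :: "'a dspace \<Rightarrow> 'a form dspace" where
  "forms_ds S = (forms S, \<lambda>k R q. domain k R \<and> q ` R \<subseteq> forms S \<and>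
     (\<forall>n U p. snd S n U p \<longrightarrow>
        (\<forall>i<n. smooth_fun (k + n) (dom_prod k R n U) (\<lambda>z. q (pfst k z) n U p (psnd k z) i))))"

definition fadd :: "'a dspace \<Rightarrow> 'a form \<Rightarrow> 'a form \<Rightarrow> 'a form" where
  "fadd S \<omega> \<eta> = (\<lambda>n U p u. if snd S n U p \<and> u \<in> U then (\<lambda>i. \<omega> n U p u i + \<eta> n U p u i) else undefined)"

definition fsmul :: "'a dspace \<Rightarrow> real \<Rightarrow> 'a form \<Rightarrow> 'a form" where
  "fsmul S a \<omega> = (\<lambda>n U p u. if snd S n U p \<and> u \<in> U then (\<lambda>i. a * \<omega> n U p u i) else undefined)"

definition fzero :: "'a dspace \<Rightarrow> 'a form" where
  "fzero S = (\<lambda>n U p u. if snd S n U p \<and> u \<in> U then (\<lambda>i. 0) else undefined)"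

definition vanishes_at :: "'a dspace \<Rightarrow> 'a form \<Rightarrow> 'a \<Rightarrow> bool" where
  "vanishes_at S \<omega> x \<longleftrightarrow> (\<forall>n U p. snd S n U p \<and> (\<lambda>_. 0) \<in> U \<and> p (\<lambda>_. 0) = x \<longrightarrow>
       \<omega> n U p (\<lambda>_. 0) = (\<lambda>_. 0))"

text \<open>Lambda^1(X): pairs (x, class of omega modulo forms vanishing at x).\<close>
definition lclass :: "'a dspace \<Rightarrow> 'a \<Rightarrow> 'a form \<Rightarrow> 'a form set" where
  "lclass S x \<omega> = {\<eta> \<in> forms S. vanishes_at S (fadd S \<eta> (fsmul S (-1) \<omega>)) x}"

definition piOL :: "'a dspace \<Rightarrow> 'a \<times> 'a form \<Rightarrow> 'a \<times> 'a form set" where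
  "piOL S xw = (fst xw, lclass S (fst xw) (snd xw))"

definition Lambda_ds :: "'a dspace \<Rightarrow> ('a \<times> 'a form set) dspace" where
  "Lambda_ds S = (piOL S ` (fst S \<times> forms S),
     \<lambda>n U p. domain n U \<and> p ` U \<subseteq> piOL S ` (fst S \<times> forms S) \<and>
       (\<forall>u\<in>U. \<exists>V q. u \<in> V \<and> V \<subseteq> U \<and> domain n V \<and> snd (prod_ds S (forms_ds S)) n V q \<and>
          (\<forall>v\<in>V. p v = piOL S (q v))))"

definition rep :: "'b set \<Rightarrow> 'b" where
  "rep C = (SOME c. c \<in> C)"

definition Lambda :: "'a dspace \<Rightarrow> ('a, 'a \<times> 'a form set) vpb" where
  "Lambda S = \<lparr>base = S, total = Lambda_ds S, proj = fst,
     vadd = (\<lambda>a b. piOL S (fst a, fadd S (rep (snd a)) (rep (snd b)))),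
     vsmul = (\<lambda>r a. piOL S (fst a, fsmul S r (rep (snd a)))),
     vzero = (\<lambda>x. piOL S (x, fzero S))\<rparr>"

definition dform :: "'a dspace \<Rightarrow> ('a \<Rightarrow> real) \<Rightarrow> 'a form" where
  "dform S h = (\<lambda>n U p u. if snd S n U p \<and> u \<in> U then (\<lambda>i. if i < n then pdiff i (h \<circ> p) u else 0)
                          else undefined)"

definition dsec :: "'a dspace \<Rightarrow> ('a \<Rightarrow> real) \<Rightarrow> 'a \<Rightarrow> 'a \<times> 'a form set" where
  "dsec S h = (\<lambda>x\<in>fst S. piOL S (x, dform S h))"

definition fib_linear :: "('a, 'v, 'z) vpb_scheme \<Rightarrow> 'a \<Rightarrow> ('v \<Rightarrow> real) \<Rightarrow> bool" where
  "fib_linear E x f \<longleftrightarrow> (\<forall>u\<in>fibre E x. \<forall>v\<in>fibre E x. f (vadd E u v) = f u + f v) \<and>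
     (\<forall>a. \<forall>v\<in>fibre E x. f (vsmul E a v) = a * f v)"

definition dual_carrier :: "('a, 'v, 'z) vpb_scheme \<Rightarrow> ('a \<times> ('v \<Rightarrow> real)) set" where
  "dual_carrier E = {(x, f). x \<in> fst (base E) \<and> f \<in> extensional (fibre E x) \<and> fib_linear E x f \<and>
      dsmooth (subspace (total E) (fibre E x)) real_ds f}"

definition dual_ds :: "('a, 'v, 'z) vpb_scheme \<Rightarrow> ('a \<times> ('v \<Rightarrow> real)) dspace" where
  "dual_ds E = (dual_carrier E, \<lambda>n U p. domain n U \<and> p ` U \<subseteq> dual_carrier E \<and>
     (\<forall>m W q. snd (total E) m W q \<longrightarrow>
        (\<forall>k R G. domain k R \<and> smooth_map k R (n + m) (dom_prod n U m W) G \<and>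
            G ` R \<subseteq> {z \<in> dom_prod n U m W. fst (p (pfst n z)) = proj E (q (psnd n z))} \<longrightarrow>
          smooth_fun k R (\<lambda>r. snd (p (pfst n (G r))) (q (psnd n (G r)))))))"

definition dual :: "('a, 'v, 'z) vpb_scheme \<Rightarrow> ('a, 'a \<times> ('v \<Rightarrow> real)) vpb" where
  "dual E = \<lparr>base = base E, total = dual_ds E, proj = fst,
     vadd = (\<lambda>a b. (fst a, \<lambda>v\<in>fibre E (fst a). snd a v + snd b v)),
     vsmul = (\<lambda>r a. (fst a, \<lambda>v\<in>fibre E (fst a). r * snd a v)),
     vzero = (\<lambda>x. (x, \<lambda>v\<in>fibre E x. 0))\<rparr>"

definition bilin :: "('a, 'l, 'z) vpb_scheme \<Rightarrow> ('a, 'v, 'y) vpb_scheme \<Rightarrow> 'a \<Rightarrow> ('l \<Rightarrow> 'v \<Rightarrow> real) \<Rightarrow> bool" where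
  "bilin L V x \<beta> \<longleftrightarrow>
     (\<forall>l1\<in>fibre L x. \<forall>l2\<in>fibre L x. \<forall>v\<in>fibre V x. \<beta> (vadd L l1 l2) v = \<beta> l1 v + \<beta> l2 v) \<and>
     (\<forall>a. \<forall>l\<in>fibre L x. \<forall>v\<in>fibre V x. \<beta> (vsmul L a l) v = a * \<beta> l v) \<and>
     (\<forall>l\<in>fibre L x. \<forall>v1\<in>fibre V x. \<forall>v2\<in>fibre V x. \<beta> l (vadd V v1 v2) = \<beta> l v1 + \<beta> l v2) \<and>
     (\<forall>a. \<forall>l\<in>fibre L x. \<forall>v\<in>fibre V x. \<beta> l (vsmul V a v) = a * \<beta> l v)"

text \<open>The algebraic tensor product L_x (x) V_x: formal sums modulo identification by all bilinear forms.\<close>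
definition tclass :: "('a, 'l, 'z) vpb_scheme \<Rightarrow> ('a, 'v, 'y) vpb_scheme \<Rightarrow> 'a \<Rightarrow> ('l \<times> 'v) list \<Rightarrow> ('l \<times> 'v) list set" where
  "tclass L V x xs = {ys. set ys \<subseteq> fibre L x \<times> fibre V x \<and>
      (\<forall>\<beta>. bilin L V x \<beta> \<longrightarrow> (\<Sum>(l, v)\<leftarrow>ys. \<beta> l v) = (\<Sum>(l, v)\<leftarrow>xs. \<beta> l v))}"

definition tcarrier :: "('a, 'l, 'z) vpb_scheme \<Rightarrow> ('a, 'v, 'y) vpb_scheme \<Rightarrow> ('a \<times> ('l \<times> 'v) list set) set" where
  "tcarrier L V = {(x, tclass L V x xs) | x xs. x \<in> fst (base L) \<and> set xs \<subseteq> fibre L x \<times> fibre V x}"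

definition tensor_pre :: "('a, 'l, 'z) vpb_scheme \<Rightarrow> ('a, 'v, 'y) vpb_scheme \<Rightarrow> ('a \<times> ('l \<times> 'v) list set) plots
     \<Rightarrow> ('a, 'a \<times> ('l \<times> 'v) list set) vpb" where
  "tensor_pre L V P = \<lparr>base = base L, total = (tcarrier L V, P), proj = fst,
     vadd = (\<lambda>a b. (fst a, tclass L V (fst a) (rep (snd a) @ rep (snd b)))),
     vsmul = (\<lambda>r a. (fst a, tclass L V (fst a) (map (\<lambda>lv. (vsmul L r (fst lv), snd lv)) (rep (snd a))))),
     vzero = (\<lambda>x. (x, tclass L V x []))\<rparr>"

definition tmap :: "('a, 'l, 'z) vpb_scheme \<Rightarrow> ('a, 'v, 'y) vpb_scheme \<Rightarrow> 'l \<times> 'v \<Rightarrow> 'a \<times> ('l \<times> 'v) list set" where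
  "tmap L V lv = (proj L (fst lv), tclass L V (proj L (fst lv)) [lv])"

text \<open>Tensor product diffeology: the finest vector pseudo-bundle diffeology for which the
  tensor map from the fibred product L x_X V is smooth.\<close>
definition tensor :: "('a, 'l, 'z) vpb_scheme \<Rightarrow> ('a, 'v, 'y) vpb_scheme \<Rightarrow> ('a, 'a \<times> ('l \<times> 'v) list set) vpb" where
  "tensor L V = tensor_pre L V (\<lambda>n U p. \<forall>P. is_vpb (tensor_pre L V P) \<and>
       dsmooth (fibred_prod L V) (total (tensor_pre L V P)) (tmap L V) \<longrightarrow> P n U p)"

type_synonym ('a, 'v) lt = "'a \<times> (('a \<times> 'a form set) \<times> 'v) list set"

definition connection :: "('a, 'v, 'z) vpb_scheme \<Rightarrow> (('a \<Rightarrow> 'v) \<Rightarrow> ('a \<Rightarrow> ('a, 'v) lt)) \<Rightarrow> bool" where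
  "connection E nabla \<longleftrightarrow>
     (let X = base E; L = Lambda X; T = tensor L E; Secs = fst (sections_ds E) in
      dsmooth (sections_ds E) (sections_ds T) nabla \<and>
      (\<forall>s\<in>Secs. \<forall>s'\<in>Secs. nabla (\<lambda>x\<in>fst X. vadd E (s x) (s' x)) =
                              (\<lambda>x\<in>fst X. vadd T (nabla s x) (nabla s' x))) \<and>
      (\<forall>a. \<forall>s\<in>Secs. nabla (\<lambda>x\<in>fst X. vsmul E a (s x)) = (\<lambda>x\<in>fst X. vsmul T a (nabla s x))) \<and>
      (\<forall>h. dsmooth X real_ds h \<longrightarrow> (\<forall>s\<in>Secs.
          nabla (\<lambda>x\<in>fst X. vsmul E (h x) (s x)) =
          (\<lambda>x\<in>fst X. vadd T (tmap L E (dsec X h x, s x)) (vsmul T (h x) (nabla s x))))))"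

text \<open>(t(x) (x) Id) applied to an element of Lambda^1_x (x) V_x.\<close>
definition tevalId :: "('a, 'v, 'z) vpb_scheme \<Rightarrow> ('a \<Rightarrow> 'a \<times> ('a \<times> 'a form set \<Rightarrow> real)) \<Rightarrow> ('a, 'v) lt \<Rightarrow> 'v" where
  "tevalId E t c = foldr (\<lambda>lv acc. vadd E (vsmul E (snd (t (fst c)) (fst lv)) (snd lv)) acc)
                         (rep (snd c)) (vzero E (fst c))"

definition cov_deriv :: "('a, 'v, 'z) vpb_scheme \<Rightarrow> (('a \<Rightarrow> 'v) \<Rightarrow> ('a \<Rightarrow> ('a, 'v) lt))
     \<Rightarrow> ('a \<Rightarrow> 'a \<times> ('a \<times> 'a form set \<Rightarrow> real)) \<Rightarrow> ('a \<Rightarrow> 'v) \<Rightarrow> ('a \<Rightarrow> 'v)" where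
  "cov_deriv E nabla t s = (\<lambda>x\<in>fst (base E). tevalId E t (nabla s x))"

end

theory Submission
  imports Defs "HOL-Library.Function_Algebras"
begin

text \<open>
  \<open>\<nabla>\<^sub>t\<close> is \<open>\<nabla>\<close> followed by post-composition with the contraction
  \<open>\<Phi> = t \<otimes> Id : \<Lambda>\<^sup>1(X) \<otimes> V \<rightarrow> V\<close>, and post-composition with a smooth fibre-preserving
  map is smooth on sections for the functional diffeology; so everything reduces to the smoothness
  of \<open>\<Phi>\<close>. In finite dimension linear functionals separate points of \<open>V\<^sub>x\<close>, which makes
  \<open>\<Phi>\<close> well defined and fibrewise linear on the algebraic tensor product. Pulling the
  diffeology of \<open>V\<close> back along \<open>\<Phi>\<close> then yields a vector pseudo-bundle structure on the
  fibrewise tensor products for which \<open>l \<otimes> v \<mapsto> t(l) v\<close> is smooth (the dual plot \<open>t\<close> is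
  evaluated along the diagonal), i.e. the tensor map is smooth. As the tensor product
  diffeology is the finest with this property, its plots are plots of the pullback: \<open>\<Phi>\<close> is smooth.
\<close>

section \<open>Finite-dimensional vector spaces\<close>

lemma vspaceD:
  assumes "vspace S add smul z"
  shows "z \<in> S" "\<And>u v. u \<in> S \<Longrightarrow> v \<in> S \<Longrightarrow> add u v \<in> S" "\<And>a v. v \<in> S \<Longrightarrow> smul a v \<in> S"
    "\<And>u v w. u \<in> S \<Longrightarrow> v \<in> S \<Longrightarrow> w \<in> S \<Longrightarrow> add (add u v) w = add u (add v w)"
    "\<And>u v. u \<in> S \<Longrightarrow> v \<in> S \<Longrightarrow> add u v = add v u"
    "\<And>v. v \<in> S \<Longrightarrow> add z v = v" "\<And>v. v \<in> S \<Longrightarrow> add v (smul (-1) v) = z"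
    "\<And>a b v. v \<in> S \<Longrightarrow> smul a (smul b v) = smul (a * b) v" "\<And>v. v \<in> S \<Longrightarrow> smul 1 v = v"
    "\<And>a u v. u \<in> S \<Longrightarrow> v \<in> S \<Longrightarrow> smul a (add u v) = add (smul a u) (smul a v)"
    "\<And>a b v. v \<in> S \<Longrightarrow> smul (a + b) v = add (smul a v) (smul b v)"
  by (metis assms[unfolded vspace_def])+

lemma vspace_add_zero_right:
  assumes "vspace S add smul z" "v \<in> S"
  shows "add v z = v"
  using vspaceD(1,5,6)[OF assms(1)] assms(2) by metis

lemma vspace_scale_zero_left:
  assumes V: "vspace S add smul z" and v: "v \<in> S"
  shows "smul 0 v = z"
proof -
  note VS = vspaceD[OF V]
  let ?w = "smul 0 v"
  have w: "?w \<in> S" using VS(3) v by blast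
  have ww: "add ?w ?w = ?w" using VS(11)[OF v, of 0 0] by simp
  have "z = add ?w (smul (-1) ?w)" using VS(7) w by simp
  also have "\<dots> = add (add ?w ?w) (smul (-1) ?w)" using ww by simp
  also have "\<dots> = add ?w (add ?w (smul (-1) ?w))" using VS(4)[OF w w VS(3)[OF w]] by simp
  also have "\<dots> = ?w" using VS(7)[OF w] vspace_add_zero_right[OF V w] by simp
  finally show ?thesis by simp
qed

lemma vspace_scale_zero_right:
  assumes V: "vspace S add smul z"
  shows "smul r z = z"
  using vspaceD(1,8)[OF V] vspace_scale_zero_left[OF V] by (metis mult_zero_right)

lemma vspace_eq_if_diff_zero:
  assumes V: "vspace S add smul z" and u: "u \<in> S" and v: "v \<in> S"
    and diff: "add u (smul (-1) v) = z"
  shows "u = v"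
proof -
  note VS = vspaceD[OF V]
  have m: "smul (-1) v \<in> S" using VS(3) v by blast
  have "v = add (add u (smul (-1) v)) v" using VS(6) v diff by simp
  also have "\<dots> = add u (add (smul (-1) v) v)" using VS(4)[OF u m v] by simp
  also have "\<dots> = u" using VS(5)[OF m v] VS(7)[OF v] vspace_add_zero_right[OF V u] by simp
  finally show ?thesis by simp
qed

lemma vspace_add_add_swap:
  assumes V: "vspace S add smul z" and "a \<in> S" "b \<in> S" "c \<in> S" "d \<in> S"
  shows "add (add a b) (add c d) = add (add a c) (add b d)"
  using vspaceD(2,4,5)[OF V] assms(2-5) by metis

lemma lcomb_in:
  assumes V: "vspace S add smul z" and "set bs \<subseteq> S"
  shows "lcomb add smul z (zip cs bs) \<in> S"
  using assms(2)
proof (induction bs arbitrary: cs)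
  case Nil
  then show ?case using vspaceD(1)[OF V] by simp
next
  case (Cons b bs)
  then show ?case using vspaceD(1,2,3)[OF V] by (cases cs) auto
qed

lemma lcomb_add:
  assumes V: "vspace S add smul z" and "set bs \<subseteq> S"
    and "length cs = length bs" "length ds = length bs"
  shows "lcomb add smul z (zip (map2 (+) cs ds) bs)
    = add (lcomb add smul z (zip cs bs)) (lcomb add smul z (zip ds bs))"
  using assms(2-)
proof (induction bs arbitrary: cs ds)
  case Nil
  then show ?case using vspaceD(1,6)[OF V] by simp
next
  case (Cons b bs)
  obtain c cs' d ds' where cs: "cs = c # cs'" "ds = d # ds'"
    using Cons.prems by (cases cs; cases ds) auto
  have b: "b \<in> S" and bs: "set bs \<subseteq> S" using Cons.prems by auto
  have "lcomb add smul z (zip (map2 (+) cs ds) (b # bs))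
      = add (add (smul c b) (smul d b)) (add (lcomb add smul z (zip cs' bs)) (lcomb add smul z (zip ds' bs)))"
    using cs Cons vspaceD(11)[OF V b] by simp
  also have "\<dots> = add (add (smul c b) (lcomb add smul z (zip cs' bs)))
      (add (smul d b) (lcomb add smul z (zip ds' bs)))"
    using vspace_add_add_swap[OF V] vspaceD(3)[OF V b] lcomb_in[OF V bs] by blast
  finally show ?case using cs by simp
qed

lemma lcomb_scale:
  assumes V: "vspace S add smul z" and "set bs \<subseteq> S"
  shows "lcomb add smul z (zip (map ((*) r) cs) bs) = smul r (lcomb add smul z (zip cs bs))"
  using assms(2)
proof (induction bs arbitrary: cs)
  case Nil
  then show ?case using vspace_scale_zero_right[OF V] by simp
next
  case (Cons b bs)
  then show ?case
    using vspace_scale_zero_right[OF V] vspaceD(3,8,10)[OF V] lcomb_in[OF V]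
    by (cases cs) simp_all
qed

text \<open>\<open>nat \<Rightarrow> real\<close> has no \<open>real_vector\<close> instance, so the coordinate space
  is given its scalar multiplication explicitly.\<close>
definition coeff_scale :: "real \<Rightarrow> (nat \<Rightarrow> real) \<Rightarrow> nat \<Rightarrow> real" where
  "coeff_scale r c = (\<lambda>i. r * c i)"

lemma vector_space_coeff_scale: "vector_space coeff_scale"
  by unfold_locales (auto simp: coeff_scale_def fun_eq_iff algebra_simps)

lemma vector_space_pair_coeff_scale: "vector_space_pair coeff_scale ((*) :: real \<Rightarrow> real \<Rightarrow> real)"
  unfolding vector_space_pair_def using vector_space_coeff_scale
  by (auto simp: vector_space_def algebra_simps)

definition lcomb_fun :: "('v \<Rightarrow> 'v \<Rightarrow> 'v) \<Rightarrow> (real \<Rightarrow> 'v \<Rightarrow> 'v) \<Rightarrow> 'v \<Rightarrow> 'v list \<Rightarrow> (nat \<Rightarrow> real) \<Rightarrow> 'v" where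
  "lcomb_fun add smul z bs c = lcomb add smul z (zip (map c [0..<length bs]) bs)"

context
  fixes S add smul z bs
  assumes V: "vspace S add smul z" and bs: "set bs \<subseteq> S"
begin

lemma lcomb_fun_in: "lcomb_fun add smul z bs c \<in> S"
  unfolding lcomb_fun_def by (rule lcomb_in[OF V bs])

lemma lcomb_fun_add: "lcomb_fun add smul z bs (c + d) = add (lcomb_fun add smul z bs c) (lcomb_fun add smul z bs d)"
proof -
  have "map (c + d) xs = map2 (+) (map c xs) (map d xs)" for xs :: "nat list"
    by (induct xs) auto
  then show ?thesis unfolding lcomb_fun_def by (simp only: lcomb_add[OF V bs] length_map length_upt)
qed

lemma lcomb_fun_scale: "lcomb_fun add smul z bs (coeff_scale r c) = smul r (lcomb_fun add smul z bs c)"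
proof -
  have "map (coeff_scale r c) xs = map ((*) r) (map c xs)" for xs :: "nat list"
    by (simp add: coeff_scale_def)
  then show ?thesis unfolding lcomb_fun_def by (simp only: lcomb_scale[OF V bs])
qed

end

lemma coeff_functional_vanishing_on_subspace:
  assumes K: "module.subspace coeff_scale K" and c0: "c0 \<notin> K"
  obtains g where "Vector_Spaces.linear coeff_scale (*) g" "\<And>c. c \<in> K \<Longrightarrow> g c = 0" "g c0 = 1"
proof -
  interpret C: vector_space coeff_scale by (rule vector_space_coeff_scale)
  interpret CP: vector_space_pair coeff_scale "(*) :: real \<Rightarrow> real \<Rightarrow> real"
    by (rule vector_space_pair_coeff_scale)
  obtain B where B: "B \<subseteq> K" "C.independent B" "K \<subseteq> C.span B"
    using C.maximal_independent_subset[of K] by blast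
  have "C.independent (insert c0 B)"
    using C.independent_insertI[OF _ B(2)] c0 C.span_minimal[OF B(1) K] by blast
  then obtain g where g: "Vector_Spaces.linear coeff_scale (*) g"
      "\<forall>c\<in>insert c0 B. g c = (if c = c0 then 1 else 0)"
    using CP.linear_independent_extend[of _ "\<lambda>c. if c = c0 then 1 else 0"] by blast
  have "g c = 0" if "c \<in> K" for c
  proof -
    have "\<forall>b\<in>B. g b = 0" using g(2) B(1) c0 by auto
    then show ?thesis using CP.linear_eq_0_on_span[OF g(1)] B(3) that by blast
  qed
  then show thesis using that g by simp
qed

text \<open>Only the span of a finite list is assumed, so \<open>S\<close> is identified with a quotient
  of the coordinate space; a linear functional on the coordinates vanishing on the kernel
  and not at a preimage of \<open>w\<close> descends to the required functional.\<close>
lemma fin_dim_separating_functional: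
  assumes V: "vspace S add smul z" and bs: "set bs \<subseteq> S"
    and span: "\<forall>v\<in>S. \<exists>cs. length cs = length bs \<and> v = lcomb add smul z (zip cs bs)"
    and w: "w \<in> S" "w \<noteq> z"
  obtains \<phi> where "\<forall>u\<in>S. \<forall>v\<in>S. \<phi> (add u v) = \<phi> u + \<phi> v"
    "\<forall>a. \<forall>v\<in>S. \<phi> (smul a v) = a * \<phi> v" "\<phi> w \<noteq> 0"
proof -
  interpret C: vector_space coeff_scale by (rule vector_space_coeff_scale)
  note VS = vspaceD[OF V]
  define L where "L = lcomb_fun add smul z bs"
  note L_in = lcomb_fun_in[OF V bs, folded L_def]
    and L_add = lcomb_fun_add[OF V bs, folded L_def]
    and L_scale = lcomb_fun_scale[OF V bs, folded L_def]
  have L_onto: "\<exists>c. L c = v" if v: "v \<in> S" for v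
  proof -
    obtain cs where cs: "length cs = length bs" "v = lcomb add smul z (zip cs bs)"
      using span v by blast
    have "map (\<lambda>i. cs ! i) [0..<length bs] = cs" using map_nth cs(1) by metis
    then have "L (\<lambda>i. cs ! i) = v" unfolding L_def lcomb_fun_def cs(2) by simp
    then show ?thesis by blast
  qed
  define K where "K = {c. L c = z}"
  have "L 0 = z"
    using L_scale[of 0 0] vspace_scale_zero_left[OF V L_in] by (simp add: coeff_scale_def zero_fun_def)
  then have K: "C.subspace K"
    unfolding C.subspace_def K_def using L_add L_scale VS(6)[OF VS(1)] vspace_scale_zero_right[OF V]
    by simp
  obtain c0 where c0: "L c0 = w" using L_onto w(1) by blast
  then have "c0 \<notin> K" using w(2) K_def by auto
  then obtain g where g: "Vector_Spaces.linear coeff_scale (*) g" "\<And>c. c \<in> K \<Longrightarrow> g c = 0" "g c0 = 1"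
    using coeff_functional_vanishing_on_subspace[OF K] by blast
  interpret G: Vector_Spaces.linear coeff_scale "(*) :: real \<Rightarrow> real \<Rightarrow> real" g by (rule g(1))
  have g_eq: "g c = g d" if "L c = L d" for c d
  proof -
    have "c + coeff_scale (-1) d = c - d" by (simp add: coeff_scale_def fun_eq_iff)
    moreover have "L (c + coeff_scale (-1) d) = z"
      using that VS(7)[OF L_in[of d]] by (simp only: L_add L_scale)
    ultimately have "g (c - d) = 0" using g(2) K_def by auto
    then show ?thesis using G.diff by simp
  qed
  define \<phi> where "\<phi> v = g (SOME c. L c = v)" for v
  have \<phi>: "\<phi> v = g c" if "L c = v" for c v
  proof -
    have "L (SOME c. L c = v) = v" using someI[of "\<lambda>c. L c = v"] that by blast
    then show ?thesis unfolding \<phi>_def using g_eq that by simp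
  qed
  show thesis
  proof (rule that)
    show "\<forall>u\<in>S. \<forall>v\<in>S. \<phi> (add u v) = \<phi> u + \<phi> v"
    proof (intro ballI)
      fix u v assume "u \<in> S" "v \<in> S"
      then obtain cu cv where "L cu = u" "L cv = v" using L_onto by blast
      then show "\<phi> (add u v) = \<phi> u + \<phi> v"
        using \<phi>[of "cu + cv"] \<phi>[of cu] \<phi>[of cv] L_add G.add by simp
    qed
    show "\<forall>a. \<forall>v\<in>S. \<phi> (smul a v) = a * \<phi> v"
    proof (intro allI ballI)
      fix a v assume "v \<in> S"
      then obtain cv where "L cv = v" using L_onto by blast
      then show "\<phi> (smul a v) = a * \<phi> v"
        using \<phi>[of "coeff_scale a cv"] \<phi>[of cv] L_scale G.scale by simp
    qed
    show "\<phi> w \<noteq> 0" using \<phi>[OF c0] g(3) by simp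
  qed
qed

section \<open>Contraction of formal tensors\<close>

definition contract :: "('a, 'v, 'z) vpb_scheme \<Rightarrow> ('l \<Rightarrow> real) \<Rightarrow> 'a \<Rightarrow> ('l \<times> 'v) list \<Rightarrow> 'v" where
  "contract E f x ys = foldr (\<lambda>lv acc. vadd E (vsmul E (f (fst lv)) (snd lv)) acc) ys (vzero E x)"

lemma contract_Nil [simp]: "contract E f x [] = vzero E x"
  by (simp add: contract_def)

lemma contract_Cons [simp]:
  "contract E f x (lv # ys) = vadd E (vsmul E (f (fst lv)) (snd lv)) (contract E f x ys)"
  by (simp add: contract_def)

lemma tevalId_eq_contract: "tevalId E t c = contract E (snd (t (fst c))) (fst c) (rep (snd c))"
  unfolding tevalId_def contract_def ..

context
  fixes E :: "('a, 'v, 'z) vpb_scheme" and x :: 'a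
  assumes VS: "vspace (fibre E x) (vadd E) (vsmul E) (vzero E x)"
begin

lemma contract_in_fibre: "\<forall>lv\<in>set ys. snd lv \<in> fibre E x \<Longrightarrow> contract E f x ys \<in> fibre E x"
  by (induction ys) (simp_all add: vspaceD(1,2,3)[OF VS])

lemma contract_append:
  assumes "\<forall>lv\<in>set ys. snd lv \<in> fibre E x" "\<forall>lv\<in>set zs. snd lv \<in> fibre E x"
  shows "contract E f x (ys @ zs) = vadd E (contract E f x ys) (contract E f x zs)"
  using assms(1)
proof (induction ys)
  case Nil
  then show ?case using vspaceD(6)[OF VS contract_in_fibre[OF assms(2)]] by simp
next
  case (Cons lv ys)
  have "vsmul E (f (fst lv)) (snd lv) \<in> fibre E x" using vspaceD(3)[OF VS] Cons.prems by simp
  moreover have "contract E f x ys \<in> fibre E x"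
    by (rule contract_in_fibre) (use Cons.prems in simp)
  ultimately show ?case
    using Cons vspaceD(4)[OF VS _ _ contract_in_fibre[OF assms(2)]] by simp
qed

lemma linear_functional_contract:
  assumes add: "\<forall>u\<in>fibre E x. \<forall>v\<in>fibre E x. \<phi> (vadd E u v) = \<phi> u + \<phi> v"
    and scale: "\<forall>a. \<forall>v\<in>fibre E x. \<phi> (vsmul E a v) = a * \<phi> v"
    and "\<forall>lv\<in>set ys. snd lv \<in> fibre E x"
  shows "\<phi> (contract E f x ys) = (\<Sum>(l, v)\<leftarrow>ys. f l * \<phi> v)"
  using assms(3)
proof (induction ys)
  case Nil
  have "\<phi> (vzero E x) = \<phi> (vsmul E 0 (vzero E x))"
    using vspace_scale_zero_left[OF VS vspaceD(1)[OF VS]] by simp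
  then show ?case using scale vspaceD(1)[OF VS] by simp
next
  case (Cons lv ys)
  have "vsmul E (f (fst lv)) (snd lv) \<in> fibre E x" using vspaceD(3)[OF VS] Cons.prems by simp
  moreover have "contract E f x ys \<in> fibre E x"
    by (rule contract_in_fibre) (use Cons.prems in simp)
  ultimately show ?case using Cons add scale by (cases lv) simp
qed

lemma contract_scale_left:
  assumes f: "fib_linear L x f"
    and "\<forall>lv\<in>set ys. fst lv \<in> fibre L x \<and> snd lv \<in> fibre E x"
  shows "contract E f x (map (\<lambda>lv. (vsmul L r (fst lv), snd lv)) ys) = vsmul E r (contract E f x ys)"
  using assms(2)
proof (induction ys)
  case Nil
  then show ?case using vspace_scale_zero_right[OF VS] by simp
next
  case (Cons lv ys)
  have l: "fst lv \<in> fibre L x" and v: "snd lv \<in> fibre E x" using Cons.prems by auto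
  have "f (vsmul L r (fst lv)) = r * f (fst lv)" using f l unfolding fib_linear_def by blast
  then have "contract E f x (map (\<lambda>lv. (vsmul L r (fst lv), snd lv)) (lv # ys))
      = vadd E (vsmul E r (vsmul E (f (fst lv)) (snd lv))) (vsmul E r (contract E f x ys))"
    using Cons vspaceD(8)[OF VS v] by simp
  also have "\<dots> = vsmul E r (contract E f x (lv # ys))"
    using vspaceD(10)[OF VS vspaceD(3)[OF VS v] contract_in_fibre[of ys]] Cons.prems by simp
  finally show ?case .
qed

text \<open>Well-definedness of \<open>t \<otimes> Id\<close> on classes of formal sums: two representatives that no
  bilinear form distinguishes have contractions that no linear functional distinguishes,
  and in finite dimension linear functionals separate points.\<close>
lemma contract_tclass:
  assumes fd: "fin_dim (fibre E x) (vadd E) (vsmul E) (vzero E x)"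
    and f: "fib_linear L x f"
    and ys: "\<forall>lv\<in>set ys. snd lv \<in> fibre E x"
    and zs: "zs \<in> tclass L E x ys"
  shows "contract E f x zs = contract E f x ys"
proof (rule ccontr)
  assume ne: "contract E f x zs \<noteq> contract E f x ys"
  have zs': "\<forall>lv\<in>set zs. snd lv \<in> fibre E x" using zs unfolding tclass_def by auto
  note in_z = contract_in_fibre[OF zs'] and in_y = contract_in_fibre[OF ys]
  define w where "w = vadd E (contract E f x zs) (vsmul E (-1) (contract E f x ys))"
  have w: "w \<in> fibre E x" using vspaceD(2,3)[OF VS] in_z in_y w_def by simp
  have "w \<noteq> vzero E x" using vspace_eq_if_diff_zero[OF VS in_z in_y] ne unfolding w_def by auto
  then obtain \<phi> where add: "\<forall>u\<in>fibre E x. \<forall>v\<in>fibre E x. \<phi> (vadd E u v) = \<phi> u + \<phi> v"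
      and scale: "\<forall>a. \<forall>v\<in>fibre E x. \<phi> (vsmul E a v) = a * \<phi> v" and "\<phi> w \<noteq> 0"
    using fin_dim_separating_functional[OF VS _ _ w] fd unfolding fin_dim_def by metis
  have "bilin L E x (\<lambda>l v. f l * \<phi> v)"
    using f add scale unfolding bilin_def fib_linear_def by (simp add: algebra_simps)
  then have "(\<Sum>(l, v)\<leftarrow>zs. f l * \<phi> v) = (\<Sum>(l, v)\<leftarrow>ys. f l * \<phi> v)"
    using zs unfolding tclass_def by blast
  then have "\<phi> (contract E f x zs) = \<phi> (contract E f x ys)"
    using linear_functional_contract[OF add scale zs'] linear_functional_contract[OF add scale ys]
    by simp
  moreover have "\<phi> w = \<phi> (contract E f x zs) - \<phi> (contract E f x ys)"
    using add scale in_z in_y vspaceD(3)[OF VS in_y] w_def by simp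
  ultimately show False using \<open>\<phi> w \<noteq> 0\<close> by simp
qed

end

section \<open>Fibres of the tensor product\<close>

lemma tensor_pre_simps:
  "base (tensor_pre L E P) = base L" "total (tensor_pre L E P) = (tcarrier L E, P)"
  "proj (tensor_pre L E P) = fst"
  "vadd (tensor_pre L E P) = (\<lambda>a b. (fst a, tclass L E (fst a) (rep (snd a) @ rep (snd b))))"
  "vsmul (tensor_pre L E P)
     = (\<lambda>r a. (fst a, tclass L E (fst a) (map (\<lambda>lv. (vsmul L r (fst lv), snd lv)) (rep (snd a)))))"
  "vzero (tensor_pre L E P) = (\<lambda>x. (x, tclass L E x []))"
  by (simp_all add: tensor_pre_def)

lemma tclass_eqI:
  assumes "\<And>\<beta>. bilin L E x \<beta> \<Longrightarrow> (\<Sum>(l, v)\<leftarrow>ys. \<beta> l v) = (\<Sum>(l, v)\<leftarrow>zs. \<beta> l v)"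
  shows "tclass L E x ys = tclass L E x zs"
  using assms unfolding tclass_def by auto

lemma tclass_self: "set ys \<subseteq> fibre L x \<times> fibre E x \<Longrightarrow> ys \<in> tclass L E x ys"
  unfolding tclass_def by simp

lemma rep_tclass: "zs \<in> tclass L E x ys \<Longrightarrow> rep (tclass L E x ys) \<in> tclass L E x ys"
  unfolding rep_def by (rule someI)

lemma bilin_sum_scale_left:
  assumes "bilin L E x \<beta>" "set ys \<subseteq> fibre L x \<times> fibre E x"
  shows "(\<Sum>(l, v)\<leftarrow>map (\<lambda>lv. (vsmul L r (fst lv), snd lv)) ys. \<beta> l v) = r * (\<Sum>(l, v)\<leftarrow>ys. \<beta> l v)"
  using assms(2) by (induction ys) (use assms(1) in \<open>auto simp: bilin_def algebra_simps\<close>)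

lemma bilin_sum_scale_right:
  assumes "bilin L E x \<beta>" "set ys \<subseteq> fibre L x \<times> fibre E x"
  shows "(\<Sum>(l, v)\<leftarrow>map (\<lambda>lv. (fst lv, vsmul E r (snd lv))) ys. \<beta> l v) = r * (\<Sum>(l, v)\<leftarrow>ys. \<beta> l v)"
  using assms(2) by (induction ys) (use assms(1) in \<open>auto simp: bilin_def algebra_simps\<close>)

lemma tclass_scale_left_right:
  assumes "set ys \<subseteq> fibre L x \<times> fibre E x"
  shows "tclass L E x (map (\<lambda>lv. (vsmul L r (fst lv), snd lv)) ys)
    = tclass L E x (map (\<lambda>lv. (fst lv, vsmul E r (snd lv))) ys)"
proof (rule tclass_eqI)
  fix \<beta> assume "bilin L E x \<beta>"
  then show "(\<Sum>(l, v)\<leftarrow>map (\<lambda>lv. (vsmul L r (fst lv), snd lv)) ys. \<beta> l v)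
      = (\<Sum>(l, v)\<leftarrow>map (\<lambda>lv. (fst lv, vsmul E r (snd lv))) ys. \<beta> l v)"
    by (simp only: bilin_sum_scale_left[OF _ assms] bilin_sum_scale_right[OF _ assms])
qed

lemma fibre_tensor_pre: "fibre (tensor_pre L E P) x = {c \<in> tcarrier L E. fst c = x}"
  by (simp add: fibre_def tensor_pre_simps)

lemma fibre_tensor_preI:
  "x \<in> fst (base L) \<Longrightarrow> set ys \<subseteq> fibre L x \<times> fibre E x \<Longrightarrow> (x, tclass L E x ys) \<in> fibre (tensor_pre L E P) x"
  unfolding fibre_tensor_pre tcarrier_def by auto

lemma fibre_tensor_preD:
  assumes "c \<in> fibre (tensor_pre L E P) x"
  shows "fst c = x" "set (rep (snd c)) \<subseteq> fibre L x \<times> fibre E x" "c = (x, tclass L E x (rep (snd c)))"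
proof -
  obtain ys where c: "c = (x, tclass L E x ys)" "set ys \<subseteq> fibre L x \<times> fibre E x"
    using assms unfolding fibre_tensor_pre tcarrier_def by auto
  have rep: "rep (snd c) \<in> tclass L E x ys" using rep_tclass[OF tclass_self[OF c(2)]] c(1) by simp
  show "fst c = x" using c(1) by simp
  show "set (rep (snd c)) \<subseteq> fibre L x \<times> fibre E x" using rep unfolding tclass_def by simp
  have "tclass L E x (rep (snd c)) = tclass L E x ys"
    by (rule tclass_eqI) (use rep in \<open>simp add: tclass_def\<close>)
  then show "c = (x, tclass L E x (rep (snd c)))" using c(1) by simp
qed

text \<open>The values of all bilinear forms determine an element of the tensor product; this is
  how the vector space axioms are transferred from \<open>\<real>\<close>.\<close>
definition tensor_apply :: "('l \<Rightarrow> 'v \<Rightarrow> real) \<Rightarrow> 'a \<times> ('l \<times> 'v) list set \<Rightarrow> real" where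
  "tensor_apply \<beta> c = (\<Sum>(l, v)\<leftarrow>rep (snd c). \<beta> l v)"

context
  fixes L :: "('a, 'l, 'y) vpb_scheme" and E :: "('a, 'v, 'z) vpb_scheme"
    and P :: "('a \<times> ('l \<times> 'v) list set) plots" and x :: 'a
  assumes x: "x \<in> fst (base L)"
    and VS: "vspace (fibre E x) (vadd E) (vsmul E) (vzero E x)"
begin

lemma tensor_apply_tclass:
  "bilin L E x \<beta> \<Longrightarrow> set ys \<subseteq> fibre L x \<times> fibre E x
    \<Longrightarrow> tensor_apply \<beta> (x, tclass L E x ys) = (\<Sum>(l, v)\<leftarrow>ys. \<beta> l v)"
  using rep_tclass[OF tclass_self, of ys L x E] unfolding tensor_apply_def tclass_def by auto

lemma tensor_pre_add:
  assumes "c \<in> fibre (tensor_pre L E P) x" "d \<in> fibre (tensor_pre L E P) x"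
  shows "vadd (tensor_pre L E P) c d \<in> fibre (tensor_pre L E P) x"
    "bilin L E x \<beta> \<Longrightarrow> tensor_apply \<beta> (vadd (tensor_pre L E P) c d) = tensor_apply \<beta> c + tensor_apply \<beta> d"
proof -
  note c = fibre_tensor_preD[OF assms(1)] and d = fibre_tensor_preD[OF assms(2)]
  have ys: "set (rep (snd c) @ rep (snd d)) \<subseteq> fibre L x \<times> fibre E x" using c(2) d(2) by simp
  show "vadd (tensor_pre L E P) c d \<in> fibre (tensor_pre L E P) x"
    using fibre_tensor_preI[OF x ys] c(1) by (simp add: tensor_pre_simps)
  show "tensor_apply \<beta> (vadd (tensor_pre L E P) c d) = tensor_apply \<beta> c + tensor_apply \<beta> d"
    if "bilin L E x \<beta>"
    using tensor_apply_tclass[OF that ys] c(1) by (simp add: tensor_apply_def tensor_pre_simps)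
qed

lemma tensor_pre_scale:
  assumes "c \<in> fibre (tensor_pre L E P) x"
  shows "vsmul (tensor_pre L E P) r c \<in> fibre (tensor_pre L E P) x"
    "bilin L E x \<beta> \<Longrightarrow> tensor_apply \<beta> (vsmul (tensor_pre L E P) r c) = r * tensor_apply \<beta> c"
proof -
  note c = fibre_tensor_preD[OF assms]
  let ?ys = "map (\<lambda>lv. (fst lv, vsmul E r (snd lv))) (rep (snd c))"
  have ys: "set ?ys \<subseteq> fibre L x \<times> fibre E x" using c(2) vspaceD(3)[OF VS] by auto
  have eq: "vsmul (tensor_pre L E P) r c = (x, tclass L E x ?ys)"
    using tclass_scale_left_right[OF c(2)] c(1) by (simp add: tensor_pre_simps)
  show "vsmul (tensor_pre L E P) r c \<in> fibre (tensor_pre L E P) x"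
    unfolding eq by (rule fibre_tensor_preI[OF x ys])
  show "tensor_apply \<beta> (vsmul (tensor_pre L E P) r c) = r * tensor_apply \<beta> c" if "bilin L E x \<beta>"
    unfolding eq tensor_apply_tclass[OF that ys] bilin_sum_scale_right[OF that c(2)]
    by (simp add: tensor_apply_def)
qed

lemma tensor_pre_zero:
  shows "vzero (tensor_pre L E P) x \<in> fibre (tensor_pre L E P) x"
    "bilin L E x \<beta> \<Longrightarrow> tensor_apply \<beta> (vzero (tensor_pre L E P) x) = 0"
  using fibre_tensor_preI[OF x, of "[]"] tensor_apply_tclass[of _ "[]"] by (simp_all add: tensor_pre_simps)

lemma tensor_pre_ext:
  assumes "c \<in> fibre (tensor_pre L E P) x" "d \<in> fibre (tensor_pre L E P) x"
    and "\<And>\<beta>. bilin L E x \<beta> \<Longrightarrow> tensor_apply \<beta> c = tensor_apply \<beta> d"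
  shows "c = d"
proof -
  have "tclass L E x (rep (snd c)) = tclass L E x (rep (snd d))"
    by (rule tclass_eqI) (use assms(3) in \<open>simp add: tensor_apply_def\<close>)
  then show ?thesis using fibre_tensor_preD(3)[OF assms(1)] fibre_tensor_preD(3)[OF assms(2)] by metis
qed

lemma tensor_pre_vspace:
  "vspace (fibre (tensor_pre L E P) x) (vadd (tensor_pre L E P)) (vsmul (tensor_pre L E P)) (vzero (tensor_pre L E P) x)"
proof -
  let ?T = "tensor_pre L E P"
  let ?F = "fibre ?T x"
  note A1 = tensor_pre_add(1) and A2 = tensor_pre_add(2)
  note S1 = tensor_pre_scale(1) and S2 = tensor_pre_scale(2)
  note Z1 = tensor_pre_zero(1) and Z2 = tensor_pre_zero(2)
  note ext = tensor_pre_ext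
  show ?thesis unfolding vspace_def
  proof (intro conjI ballI allI)
    show "vzero ?T x \<in> ?F" by (rule Z1)
  next
    fix u v assume "u \<in> ?F" "v \<in> ?F"
    then show "vadd ?T u v \<in> ?F" by (rule A1)
  next
    fix a v assume "v \<in> ?F"
    then show "vsmul ?T a v \<in> ?F" by (rule S1)
  next
    fix u v w assume u: "u \<in> ?F" and v: "v \<in> ?F" and w: "w \<in> ?F"
    show "vadd ?T (vadd ?T u v) w = vadd ?T u (vadd ?T v w)"
      by (rule ext[OF A1[OF A1[OF u v] w] A1[OF u A1[OF v w]]])
        (simp only: A2[OF A1[OF u v] w] A2[OF u A1[OF v w]] A2[OF u v] A2[OF v w] add.assoc)
  next
    fix u v assume u: "u \<in> ?F" and v: "v \<in> ?F"
    show "vadd ?T u v = vadd ?T v u"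
      by (rule ext[OF A1[OF u v] A1[OF v u]]) (simp only: A2[OF u v] A2[OF v u] add.commute)
  next
    fix v assume v: "v \<in> ?F"
    show "vadd ?T (vzero ?T x) v = v"
      by (rule ext[OF A1[OF Z1 v] v]) (simp only: A2[OF Z1 v] Z2 add_0_left)
  next
    fix v assume v: "v \<in> ?F"
    show "vadd ?T v (vsmul ?T (-1) v) = vzero ?T x"
      by (rule ext[OF A1[OF v S1[OF v]] Z1]) (simp add: A2[OF v S1[OF v]] S2[OF v] Z2)
  next
    fix a b v assume v: "v \<in> ?F"
    show "vsmul ?T a (vsmul ?T b v) = vsmul ?T (a * b) v"
      by (rule ext[OF S1[OF S1[OF v]] S1[OF v]]) (simp only: S2[OF S1[OF v]] S2[OF v] mult.assoc)
  next
    fix v assume v: "v \<in> ?F"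
    show "vsmul ?T 1 v = v"
      by (rule ext[OF S1[OF v] v]) (simp only: S2[OF v] mult_1)
  next
    fix a u v assume u: "u \<in> ?F" and v: "v \<in> ?F"
    show "vsmul ?T a (vadd ?T u v) = vadd ?T (vsmul ?T a u) (vsmul ?T a v)"
      by (rule ext[OF S1[OF A1[OF u v]] A1[OF S1[OF u] S1[OF v]]])
        (simp only: S2[OF A1[OF u v]] A2[OF S1[OF u] S1[OF v]] A2[OF u v] S2[OF u] S2[OF v] distrib_left)
  next
    fix a b v assume v: "v \<in> ?F"
    show "vsmul ?T (a + b) v = vadd ?T (vsmul ?T a v) (vsmul ?T b v)"
      by (rule ext[OF S1[OF v] A1[OF S1[OF v] S1[OF v]]])
        (simp only: S2[OF v] A2[OF S1[OF v] S1[OF v]] distrib_right)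
  qed
qed

end

lemma diffeologicalD:
  assumes "diffeological S"
  shows "snd S n U p \<Longrightarrow> domain n U"
    and "snd S n U p \<Longrightarrow> p ` U \<subseteq> fst S"
    and "snd S n U p \<Longrightarrow> \<forall>u\<in>U. p u = q u \<Longrightarrow> snd S n U q"
    and "domain n U \<Longrightarrow> x \<in> fst S \<Longrightarrow> snd S n U (\<lambda>_. x)"
    and "domain n U \<Longrightarrow> p ` U \<subseteq> fst S \<Longrightarrow> \<forall>u\<in>U. \<exists>V. u \<in> V \<and> V \<subseteq> U \<and> domain n V \<and> snd S n V p
      \<Longrightarrow> snd S n U p"
    and "snd S n U p \<Longrightarrow> domain m W \<Longrightarrow> smooth_map m W n U F \<Longrightarrow> snd S m W (p \<circ> F)"
proof -
  note A = assms[unfolded diffeological_def]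
  show "snd S n U p \<Longrightarrow> domain n U" "snd S n U p \<Longrightarrow> p ` U \<subseteq> fst S"
    using A[THEN conjunct1] by blast+
  show "snd S n U p \<Longrightarrow> \<forall>u\<in>U. p u = q u \<Longrightarrow> snd S n U q"
    using A[THEN conjunct2, THEN conjunct1] by blast
  show "domain n U \<Longrightarrow> x \<in> fst S \<Longrightarrow> snd S n U (\<lambda>_. x)"
    using A[THEN conjunct2, THEN conjunct2, THEN conjunct1] by blast
  show "domain n U \<Longrightarrow> p ` U \<subseteq> fst S
      \<Longrightarrow> \<forall>u\<in>U. \<exists>V. u \<in> V \<and> V \<subseteq> U \<and> domain n V \<and> snd S n V p \<Longrightarrow> snd S n U p"
    using A[THEN conjunct2, THEN conjunct2, THEN conjunct2, THEN conjunct1] by blast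
  show "snd S n U p \<Longrightarrow> domain m W \<Longrightarrow> smooth_map m W n U F \<Longrightarrow> snd S m W (p \<circ> F)"
    using A[THEN conjunct2, THEN conjunct2, THEN conjunct2, THEN conjunct2] by blast
qed

lemma diffeologicalI:
  assumes "\<And>n U p. snd S n U p \<Longrightarrow> domain n U \<and> p ` U \<subseteq> fst S"
    and "\<And>n U p q. snd S n U p \<Longrightarrow> \<forall>u\<in>U. p u = q u \<Longrightarrow> snd S n U q"
    and "\<And>n U x. domain n U \<Longrightarrow> x \<in> fst S \<Longrightarrow> snd S n U (\<lambda>_. x)"
    and "\<And>n U p. domain n U \<Longrightarrow> p ` U \<subseteq> fst S
      \<Longrightarrow> \<forall>u\<in>U. \<exists>V. u \<in> V \<and> V \<subseteq> U \<and> domain n V \<and> snd S n V p \<Longrightarrow> snd S n U p"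
    and "\<And>n U p m W F. snd S n U p \<Longrightarrow> domain m W \<Longrightarrow> smooth_map m W n U F \<Longrightarrow> snd S m W (p \<circ> F)"
  shows "diffeological S"
  unfolding diffeological_def
  apply (intro conjI allI impI)
  using assms(1) apply blast
  using assms(1) apply blast
  using assms(2) apply blast
  using assms(3) apply blast
  using assms(4) apply blast
  using assms(5) apply blast
  done

lemma plot_cong:
  "diffeological S \<Longrightarrow> snd S n U p \<Longrightarrow> (\<And>u. u \<in> U \<Longrightarrow> p u = q u) \<Longrightarrow> snd S n U q"
  using diffeologicalD(3) by blast

lemma dsmoothD:
  "dsmooth S T f \<Longrightarrow> x \<in> fst S \<Longrightarrow> f x \<in> fst T"
  "dsmooth S T f \<Longrightarrow> snd S n U p \<Longrightarrow> snd T n U (f \<circ> p)"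
  unfolding dsmooth_def by auto

lemma dsmooth_comp: "dsmooth S T f \<Longrightarrow> dsmooth T R g \<Longrightarrow> dsmooth S R (g \<circ> f)"
  unfolding dsmooth_def by (auto simp: comp_assoc image_subset_iff)

lemma prod_ds_simps:
  "fst (prod_ds S T) = fst S \<times> fst T"
  "snd (prod_ds S T) n U r \<longleftrightarrow> snd S n U (fst \<circ> r) \<and> snd T n U (snd \<circ> r)"
  unfolding prod_ds_def by simp_all

lemma fibred_prod_simps:
  "fst (fibred_prod E F) = (fst (total E) \<times> fst (total F)) \<inter> {(v, w). proj E v = proj F w}"
  "snd (fibred_prod E F) n U r \<longleftrightarrow> snd (total E) n U (fst \<circ> r) \<and> snd (total F) n U (snd \<circ> r)
     \<and> r ` U \<subseteq> {(v, w). proj E v = proj F w}"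
  unfolding fibred_prod_def subspace_def prod_ds_def by simp_all

lemma pdiff_coord: "pdiff i (\<lambda>w. w j) = (\<lambda>_. if i = j then 1 else 0)"
proof
  fix x :: pt
  show "pdiff i (\<lambda>w. w j) x = (if i = j then 1 else 0)"
  proof (cases "i = j")
    case True
    then have "(\<lambda>h. (x(i := x i + h)) j) = (\<lambda>h. x i + h)" by auto
    moreover have "deriv (\<lambda>h. x i + h) 0 = 1"
      by (rule DERIV_imp_deriv) (auto intro!: derivative_eq_intros)
    ultimately show ?thesis using True unfolding pdiff_def by simp
  next
    case False
    then have "(\<lambda>h. (x(i := x i + h)) j) = (\<lambda>h. x j)" by auto
    then show ?thesis using False unfolding pdiff_def by simp
  qed
qed

lemma ipdiff_coord: "ipdiff ks (\<lambda>w. w j) = (\<lambda>w. w j) \<or> (\<exists>c. ipdiff ks (\<lambda>w. w j) = (\<lambda>_. c))"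
proof (induction ks)
  case (Cons i ks)
  have "pdiff i (\<lambda>_. c) = (\<lambda>_. 0)" for c unfolding pdiff_def by simp
  with Cons show ?case by (auto simp: pdiff_coord)
qed simp

lemma smooth_fun_coord: "smooth_fun n U (\<lambda>w. w j)"
  unfolding smooth_fun_def
proof (intro allI impI conjI ballI)
  fix ks :: "nat list" and i and x :: pt
  show "continuous_on U (ipdiff ks (\<lambda>w. w j))"
    using ipdiff_coord[of ks j]
    by (metis continuous_on_const continuous_on_product_coordinates continuous_on_subset subset_UNIV)
  have "(\<lambda>h. (x(i := x i + h)) j) differentiable at 0"
  proof (cases "i = j")
    case True
    then have "(\<lambda>h. (x(i := x i + h)) j) = (\<lambda>h. x i + h)" by auto
    then show ?thesis by (simp add: differentiable_add)
  qed simp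
  then show "(\<lambda>h. ipdiff ks (\<lambda>w. w j) (x(i := x i + h))) differentiable at 0"
    using ipdiff_coord[of ks j] by auto
qed

definition pdiag :: "nat \<Rightarrow> pt \<Rightarrow> pt" where
  "pdiag n w = (\<lambda>i. if i < n then w i else if i < n + n then w (i - n) else 0)"

lemma pfst_pdiag: "w \<in> euclid n \<Longrightarrow> pfst n (pdiag n w) = w"
  unfolding pfst_def pdiag_def euclid_def by auto

lemma psnd_pdiag: "w \<in> euclid n \<Longrightarrow> psnd n (pdiag n w) = w"
  unfolding psnd_def pdiag_def euclid_def by auto

lemma smooth_map_pdiag:
  assumes "U \<subseteq> euclid n"
  shows "smooth_map n U (n + n) (dom_prod n U n U) (pdiag n)"
  unfolding smooth_map_def
proof
  show "pdiag n ` U \<subseteq> dom_prod n U n U"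
    using assms pfst_pdiag psnd_pdiag unfolding dom_prod_def by (auto simp: euclid_def pdiag_def)
  have "(\<lambda>w. pdiag n w i) = (\<lambda>w. w (if i < n then i else i - n))" if "i < n + n" for i
    using that unfolding pdiag_def by auto
  then show "\<forall>i<n + n. smooth_fun n U (\<lambda>w. pdiag n w i)" using smooth_fun_coord by simp
qed

section \<open>Pulled-back vector pseudo-bundles\<close>

lemma is_vpbD:
  assumes "is_vpb E"
  shows "diffeological (base E)" "diffeological (total E)" "dsmooth (total E) (base E) (proj E)"
    "x \<in> fst (base E) \<Longrightarrow> vspace (fibre E x) (vadd E) (vsmul E) (vzero E x)"
    "dsmooth (fibred_prod E E) (total E) (\<lambda>uv. vadd E (fst uv) (snd uv))"
    "dsmooth (prod_ds real_ds (total E)) (total E) (\<lambda>av. vsmul E (fst av) (snd av))"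
    "dsmooth (base E) (total E) (vzero E)"
  using assms unfolding is_vpb_def by simp_all

definition pullback_ds :: "'b set \<Rightarrow> ('b \<Rightarrow> 'c) \<Rightarrow> 'c dspace \<Rightarrow> 'b dspace" where
  "pullback_ds A \<Phi> T = (A, \<lambda>n U p. domain n U \<and> p ` U \<subseteq> A \<and> snd T n U (\<Phi> \<circ> p))"

lemma diffeological_pullback:
  assumes T: "diffeological T" and \<Phi>: "\<Phi> ` A \<subseteq> fst T"
  shows "diffeological (pullback_ds A \<Phi> T)"
proof (rule diffeologicalI, unfold pullback_ds_def fst_conv snd_conv)
  fix n U p q
  assume "domain n U \<and> p ` U \<subseteq> A \<and> snd T n U (\<Phi> \<circ> p)" "\<forall>u\<in>U. p u = q u"
  then show "domain n U \<and> q ` U \<subseteq> A \<and> snd T n U (\<Phi> \<circ> q)"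
    using plot_cong[OF T, of n U "\<Phi> \<circ> p" "\<Phi> \<circ> q"] by auto
next
  fix n U x assume "domain n U" "x \<in> A"
  then show "domain n U \<and> (\<lambda>_. x) ` U \<subseteq> A \<and> snd T n U (\<Phi> \<circ> (\<lambda>_. x))"
    using diffeologicalD(4)[OF T, of n U "\<Phi> x"] \<Phi> by (auto simp: o_def)
next
  fix n U p
  assume dom: "domain n U" and img: "p ` U \<subseteq> A"
    and loc: "\<forall>u\<in>U. \<exists>V. u \<in> V \<and> V \<subseteq> U \<and> domain n V \<and> domain n V \<and> p ` V \<subseteq> A \<and> snd T n V (\<Phi> \<circ> p)"
  have "(\<Phi> \<circ> p) ` U \<subseteq> fst T" using \<Phi> img by auto
  moreover have "\<forall>u\<in>U. \<exists>V. u \<in> V \<and> V \<subseteq> U \<and> domain n V \<and> snd T n V (\<Phi> \<circ> p)"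
    using loc by meson
  ultimately have "snd T n U (\<Phi> \<circ> p)" by (rule diffeologicalD(5)[OF T dom])
  then show "domain n U \<and> p ` U \<subseteq> A \<and> snd T n U (\<Phi> \<circ> p)" using dom img by blast
next
  fix n U p m W F
  assume "domain n U \<and> p ` U \<subseteq> A \<and> snd T n U (\<Phi> \<circ> p)" "domain m W" "smooth_map m W n U F"
  then show "domain m W \<and> (p \<circ> F) ` W \<subseteq> A \<and> snd T m W (\<Phi> \<circ> (p \<circ> F))"
    using diffeologicalD(6)[OF T, of n U "\<Phi> \<circ> p" m W F] unfolding smooth_map_def
    by (auto simp: comp_assoc)
qed auto

locale vpb_pullback =
  fixes E :: "('a, 'v, 'y) vpb_scheme" and W :: "('a, 'w, 'z) vpb_scheme"
    and C :: "'w set" and \<Phi> :: "'w \<Rightarrow> 'v"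
  assumes vpb: "is_vpb E"
    and base_eq: "base W = base E"
    and total_eq: "total W = pullback_ds C \<Phi> (total E)"
    and \<Phi>_in: "\<And>c. c \<in> C \<Longrightarrow> \<Phi> c \<in> fst (total E)"
    and proj_eq: "\<And>c. c \<in> C \<Longrightarrow> proj W c = proj E (\<Phi> c)"
    and fibre_vspace: "\<And>x. x \<in> fst (base E) \<Longrightarrow> vspace (fibre W x) (vadd W) (vsmul W) (vzero W x)"
    and \<Phi>_add: "\<And>x c d. x \<in> fst (base E) \<Longrightarrow> c \<in> fibre W x \<Longrightarrow> d \<in> fibre W x
      \<Longrightarrow> \<Phi> (vadd W c d) = vadd E (\<Phi> c) (\<Phi> d)"
    and \<Phi>_scale: "\<And>x r c. x \<in> fst (base E) \<Longrightarrow> c \<in> fibre W x \<Longrightarrow> \<Phi> (vsmul W r c) = vsmul E r (\<Phi> c)"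
    and \<Phi>_zero: "\<And>x. x \<in> fst (base E) \<Longrightarrow> \<Phi> (vzero W x) = vzero E x"
begin

lemma total_plot_iff: "snd (total W) n U p \<longleftrightarrow> domain n U \<and> p ` U \<subseteq> C \<and> snd (total E) n U (\<Phi> \<circ> p)"
  by (simp add: total_eq pullback_ds_def)

lemma total_carrier: "fst (total W) = C"
  by (simp add: total_eq pullback_ds_def)

lemma proj_in_base: "c \<in> C \<Longrightarrow> proj W c \<in> fst (base E)"
  using proj_eq dsmoothD(1)[OF is_vpbD(3)[OF vpb] \<Phi>_in] by simp

lemma fibreD: "c \<in> fibre W x \<Longrightarrow> c \<in> C \<and> proj W c = x"
  unfolding fibre_def total_carrier by simp

lemma fibred_plot_fibres:
  assumes "snd (fibred_prod W W) n U r" "u \<in> U"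
  obtains x where "x \<in> fst (base E)" "fst (r u) \<in> fibre W x" "snd (r u) \<in> fibre W x"
proof
  have "fst (r u) \<in> C" "snd (r u) \<in> C" "proj W (fst (r u)) = proj W (snd (r u))"
    using assms unfolding fibred_prod_simps total_plot_iff by auto
  then show "proj W (fst (r u)) \<in> fst (base E)" "fst (r u) \<in> fibre W (proj W (fst (r u)))"
    "snd (r u) \<in> fibre W (proj W (fst (r u)))"
    using proj_in_base unfolding fibre_def total_carrier by auto
qed

lemma smooth_proj: "dsmooth (total W) (base W) (proj W)"
  unfolding dsmooth_def base_eq
proof (intro conjI allI impI)
  show "proj W ` fst (total W) \<subseteq> fst (base E)" using proj_in_base total_carrier by auto
  fix n U p assume p: "snd (total W) n U p"
  then have "snd (base E) n U (proj E \<circ> (\<Phi> \<circ> p))"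
    using dsmoothD(2)[OF is_vpbD(3)[OF vpb]] total_plot_iff by blast
  then show "snd (base E) n U (proj W \<circ> p)"
    by (rule plot_cong[OF is_vpbD(1)[OF vpb]]) (use p proj_eq in \<open>auto simp: total_plot_iff\<close>)
qed

lemma smooth_add: "dsmooth (fibred_prod W W) (total W) (\<lambda>uv. vadd W (fst uv) (snd uv))"
  unfolding dsmooth_def
proof (intro conjI allI impI)
  show "(\<lambda>uv. vadd W (fst uv) (snd uv)) ` fst (fibred_prod W W) \<subseteq> fst (total W)"
    using fibre_vspace[THEN vspaceD(2)] proj_in_base
    unfolding fibred_prod_simps total_carrier fibre_def by fastforce
  fix n U r assume r: "snd (fibred_prod W W) n U r"
  define r' where "r' u = (\<Phi> (fst (r u)), \<Phi> (snd (r u)))" for u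
  have "snd (fibred_prod E E) n U r'"
    unfolding fibred_prod_simps
  proof (intro conjI)
    show "snd (total E) n U (fst \<circ> r')" "snd (total E) n U (snd \<circ> r')"
      using r unfolding r'_def fibred_prod_simps total_plot_iff by (simp_all add: o_def)
    show "r' ` U \<subseteq> {(v, w). proj E v = proj E w}"
    proof (rule image_subsetI)
      fix u assume "u \<in> U"
      with r obtain x where "x \<in> fst (base E)" "fst (r u) \<in> fibre W x" "snd (r u) \<in> fibre W x"
        by (rule fibred_plot_fibres)
      then have "proj E (\<Phi> (fst (r u))) = x" "proj E (\<Phi> (snd (r u))) = x"
        using fibreD proj_eq by metis+
      then show "r' u \<in> {(v, w). proj E v = proj E w}" unfolding r'_def by simp
    qed
  qed
  then have "snd (total E) n U ((\<lambda>uv. vadd E (fst uv) (snd uv)) \<circ> r')"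
    by (rule dsmoothD(2)[OF is_vpbD(5)[OF vpb]])
  then have "snd (total E) n U (\<Phi> \<circ> ((\<lambda>uv. vadd W (fst uv) (snd uv)) \<circ> r))"
  proof (rule plot_cong[OF is_vpbD(2)[OF vpb]])
    fix u assume "u \<in> U"
    with r obtain x where "x \<in> fst (base E)" "fst (r u) \<in> fibre W x" "snd (r u) \<in> fibre W x"
      by (rule fibred_plot_fibres)
    then show "((\<lambda>uv. vadd E (fst uv) (snd uv)) \<circ> r') u = (\<Phi> \<circ> ((\<lambda>uv. vadd W (fst uv) (snd uv)) \<circ> r)) u"
      unfolding r'_def using \<Phi>_add by simp
  qed
  moreover have "vadd W (fst (r u)) (snd (r u)) \<in> C" if "u \<in> U" for u
  proof -
    from r that obtain x where "x \<in> fst (base E)" "fst (r u) \<in> fibre W x" "snd (r u) \<in> fibre W x"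
      by (rule fibred_plot_fibres)
    then show ?thesis using vspaceD(2)[OF fibre_vspace] fibreD by blast
  qed
  moreover have "domain n U" using r unfolding fibred_prod_simps total_plot_iff by blast
  ultimately show "snd (total W) n U ((\<lambda>uv. vadd W (fst uv) (snd uv)) \<circ> r)"
    unfolding total_plot_iff by auto
qed

lemma smooth_scale: "dsmooth (prod_ds real_ds (total W)) (total W) (\<lambda>av. vsmul W (fst av) (snd av))"
  unfolding dsmooth_def
proof (intro conjI allI impI)
  have "vsmul W a c \<in> C" if "c \<in> C" for a c
    using vspaceD(3)[OF fibre_vspace[OF proj_in_base[OF that]]] that fibreD
    unfolding fibre_def total_carrier by blast
  then show "(\<lambda>av. vsmul W (fst av) (snd av)) ` fst (prod_ds real_ds (total W)) \<subseteq> fst (total W)"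
    unfolding prod_ds_simps total_carrier by auto
  fix n U r assume r: "snd (prod_ds real_ds (total W)) n U r"
  define r' where "r' u = (fst (r u), \<Phi> (snd (r u)))" for u
  have "snd (prod_ds real_ds (total E)) n U r'"
    using r unfolding r'_def prod_ds_simps total_plot_iff by (simp add: o_def)
  then have "snd (total E) n U ((\<lambda>av. vsmul E (fst av) (snd av)) \<circ> r')"
    by (rule dsmoothD(2)[OF is_vpbD(6)[OF vpb]])
  then have "snd (total E) n U (\<Phi> \<circ> ((\<lambda>av. vsmul W (fst av) (snd av)) \<circ> r))"
  proof (rule plot_cong[OF is_vpbD(2)[OF vpb]])
    fix u assume "u \<in> U"
    then have "snd (r u) \<in> C" using r unfolding prod_ds_simps total_plot_iff by auto
    then show "((\<lambda>av. vsmul E (fst av) (snd av)) \<circ> r') u = (\<Phi> \<circ> ((\<lambda>av. vsmul W (fst av) (snd av)) \<circ> r)) u"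
      unfolding r'_def using \<Phi>_scale[OF proj_in_base] by (simp add: fibre_def total_carrier)
  qed
  moreover have "vsmul W (fst (r u)) (snd (r u)) \<in> C" if "u \<in> U" for u
    using \<open>\<And>a c. c \<in> C \<Longrightarrow> vsmul W a c \<in> C\<close> r that
    unfolding prod_ds_simps total_plot_iff by auto
  moreover have "domain n U" using r unfolding prod_ds_simps total_plot_iff by blast
  ultimately show "snd (total W) n U ((\<lambda>av. vsmul W (fst av) (snd av)) \<circ> r)"
    unfolding total_plot_iff by auto
qed

lemma smooth_zero: "dsmooth (base W) (total W) (vzero W)"
  unfolding dsmooth_def base_eq
proof (intro conjI allI impI)
  have zero_in: "vzero W x \<in> C" if "x \<in> fst (base E)" for x
    using vspaceD(1)[OF fibre_vspace[OF that]] fibreD by blast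
  then show "vzero W ` fst (base E) \<subseteq> fst (total W)" unfolding total_carrier by blast
  fix n U p assume p: "snd (base E) n U p"
  have "snd (total E) n U (vzero E \<circ> p)" by (rule dsmoothD(2)[OF is_vpbD(7)[OF vpb] p])
  then have "snd (total E) n U (\<Phi> \<circ> (vzero W \<circ> p))"
    by (rule plot_cong[OF is_vpbD(2)[OF vpb]])
      (use \<Phi>_zero diffeologicalD(2)[OF is_vpbD(1)[OF vpb] p] in auto)
  then show "snd (total W) n U (vzero W \<circ> p)"
    unfolding total_plot_iff
    using zero_in diffeologicalD(1,2)[OF is_vpbD(1)[OF vpb] p] by auto
qed

lemma is_vpb: "is_vpb W"
  unfolding is_vpb_def
proof (intro conjI ballI)
  show "diffeological (base W)" using is_vpbD(1)[OF vpb] base_eq by simp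
  show "diffeological (total W)"
    unfolding total_eq by (rule diffeological_pullback[OF is_vpbD(2)[OF vpb]]) (use \<Phi>_in in auto)
  show "proj W ` fst (total W) = fst (base W)"
  proof
    show "proj W ` fst (total W) \<subseteq> fst (base W)" using proj_in_base base_eq total_carrier by auto
    show "fst (base W) \<subseteq> proj W ` fst (total W)"
      using fibre_vspace[THEN vspaceD(1)] base_eq unfolding fibre_def by force
  qed
  show "vspace (fibre W x) (vadd W) (vsmul W) (vzero W x)" if "x \<in> fst (base W)" for x
    using fibre_vspace that base_eq by simp
qed (fact smooth_proj smooth_add smooth_scale smooth_zero)+

end

lemma tensor_plotD:
  assumes "snd (total (tensor L V)) n U p" "is_vpb (tensor_pre L V P)"
    and "dsmooth (fibred_prod L V) (total (tensor_pre L V P)) (tmap L V)"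
  shows "P n U p"
  using assms unfolding tensor_def by (simp add: tensor_pre_simps) blast

lemma dual_plot_eval_smooth:
  assumes p: "snd (dual_ds L) n U p" and q: "snd (total L) n U q"
    and fibres: "\<And>u. u \<in> U \<Longrightarrow> fst (p u) = proj L (q u)"
  obtains g where "smooth_fun n U g" "\<And>u. u \<in> U \<Longrightarrow> g u = snd (p u) (q u)"
proof -
  have dom: "domain n U" using p unfolding dual_ds_def by simp
  then have U: "U \<subseteq> euclid n" unfolding domain_def by blast
  have "pdiag n ` U \<subseteq> {z \<in> dom_prod n U n U. fst (p (pfst n z)) = proj L (q (psnd n z))}"
    using smooth_map_pdiag[OF U] pfst_pdiag psnd_pdiag fibres U
    unfolding smooth_map_def by auto
  then have "smooth_fun n U (\<lambda>u. snd (p (pfst n (pdiag n u))) (q (psnd n (pdiag n u))))"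
    using p q dom smooth_map_pdiag[OF U] unfolding dual_ds_def by simp
  moreover have "pfst n (pdiag n u) = u" "psnd n (pdiag n u) = u" if "u \<in> U" for u
    using pfst_pdiag psnd_pdiag U that by auto
  ultimately show thesis using that by auto
qed

lemma sections_ds_simps:
  "fst (sections_ds F) = {s \<in> smooth_maps (base F) (total F). \<forall>x\<in>fst (base F). proj F (s x) = x}"
  "snd (sections_ds F) n U q \<longleftrightarrow> domain n U \<and> q ` U \<subseteq> fst (sections_ds F) \<and>
    (\<forall>m W p. snd (base F) m W p \<longrightarrow>
      snd (total F) (n + m) (dom_prod n U m W) (\<lambda>z. q (pfst n z) (p (psnd n z))))"
  unfolding sections_ds_def subspace_def fun_ds_def by auto

lemma smooth_maps_iff: "f \<in> smooth_maps S T \<longleftrightarrow> dsmooth S T f \<and> f \<in> extensional (fst S)"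
  unfolding smooth_maps_def by simp

lemma section_postcompose:
  assumes X: "diffeological (base E)" and V: "diffeological (total E)" and base: "base F = base E"
    and \<Psi>: "dsmooth (total F) (total E) \<Psi>" and proj: "\<And>c. c \<in> fst (total F) \<Longrightarrow> proj E (\<Psi> c) = proj F c"
    and s: "s \<in> fst (sections_ds F)"
  shows "(\<lambda>x\<in>fst (base E). \<Psi> (s x)) \<in> fst (sections_ds E)"
proof -
  have s_smooth: "dsmooth (base E) (total F) s" and s_sec: "\<forall>x\<in>fst (base E). proj F (s x) = x"
    using s base unfolding sections_ds_simps smooth_maps_iff by auto
  have "dsmooth (base E) (total E) (\<lambda>x\<in>fst (base E). \<Psi> (s x))"
    unfolding dsmooth_def
  proof (intro conjI allI impI)
    show "(\<lambda>x\<in>fst (base E). \<Psi> (s x)) ` fst (base E) \<subseteq> fst (total E)"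
      using dsmoothD(1)[OF \<Psi> dsmoothD(1)[OF s_smooth]] by auto
    fix n U p assume p: "snd (base E) n U p"
    have "snd (total E) n U (\<Psi> \<circ> (s \<circ> p))" by (rule dsmoothD(2)[OF \<Psi> dsmoothD(2)[OF s_smooth p]])
    then show "snd (total E) n U ((\<lambda>x\<in>fst (base E). \<Psi> (s x)) \<circ> p)"
      by (rule plot_cong[OF V]) (use diffeologicalD(2)[OF X p] in auto)
  qed
  moreover have "\<forall>x\<in>fst (base E). proj E (\<Psi> (s x)) = x"
    using proj dsmoothD(1)[OF s_smooth] s_sec by simp
  ultimately show ?thesis unfolding sections_ds_simps smooth_maps_iff by simp
qed

lemma dsmooth_sections_postcompose:
  assumes X: "diffeological (base E)" and V: "diffeological (total E)" and base: "base F = base E"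
    and \<Psi>: "dsmooth (total F) (total E) \<Psi>" and proj: "\<And>c. c \<in> fst (total F) \<Longrightarrow> proj E (\<Psi> c) = proj F c"
  shows "dsmooth (sections_ds F) (sections_ds E) (\<lambda>s. \<lambda>x\<in>fst (base E). \<Psi> (s x))"
  unfolding dsmooth_def
proof (intro conjI allI impI)
  note post = section_postcompose[OF X V base \<Psi> proj]
  show "(\<lambda>s. \<lambda>x\<in>fst (base E). \<Psi> (s x)) ` fst (sections_ds F) \<subseteq> fst (sections_ds E)"
    using post by blast
  fix n U q assume q: "snd (sections_ds F) n U q"
  show "snd (sections_ds E) n U ((\<lambda>s. \<lambda>x\<in>fst (base E). \<Psi> (s x)) \<circ> q)"
    unfolding sections_ds_simps(2)
  proof (intro conjI allI impI)
    show "domain n U" using q unfolding sections_ds_simps by blast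
    show "((\<lambda>s. \<lambda>x\<in>fst (base E). \<Psi> (s x)) \<circ> q) ` U \<subseteq> fst (sections_ds E)"
      using q post unfolding sections_ds_simps(2) by auto
    fix m W p assume p: "snd (base E) m W p"
    have "snd (total E) (n + m) (dom_prod n U m W) (\<Psi> \<circ> (\<lambda>z. q (pfst n z) (p (psnd n z))))"
      using dsmoothD(2)[OF \<Psi>] q p base unfolding sections_ds_simps(2) by simp
    then show "snd (total E) (n + m) (dom_prod n U m W)
        (\<lambda>z. ((\<lambda>s. \<lambda>x\<in>fst (base E). \<Psi> (s x)) \<circ> q) (pfst n z) (p (psnd n z)))"
      by (rule plot_cong[OF V]) (use diffeologicalD(2)[OF X p] in \<open>auto simp: dom_prod_def\<close>)
  qed
qed

lemma Lambda_simps: "base (Lambda S) = S" "total (Lambda S) = Lambda_ds S" "proj (Lambda S) = fst"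
  by (simp_all add: Lambda_def)

lemma dual_simps: "base (dual E) = base E" "total (dual E) = dual_ds E" "proj (dual E) = fst"
  by (simp_all add: dual_def)

lemma tensor_simps: "base (tensor L E) = base L" "proj (tensor L E) = fst" "fst (total (tensor L E)) = tcarrier L E"
  by (simp_all add: tensor_def tensor_pre_simps)

lemma tmap_in_fibre:
  "x \<in> fst (base L) \<Longrightarrow> l \<in> fibre L x \<Longrightarrow> v \<in> fibre E x \<Longrightarrow> tmap L E (l, v) \<in> fibre (tensor_pre L E P) x"
  using fibre_tensor_preI[of x L "[(l, v)]" E P] unfolding tmap_def by (simp add: fibre_def)

section \<open>Smoothness of the contraction\<close>

locale contraction =
  fixes E :: "('a, 'v, 'z) vpb_scheme" and t :: "'a \<Rightarrow> 'a \<times> ('a \<times> 'a form set \<Rightarrow> real)"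
  assumes fin_dim: "fin_dim_vpb E"
    and t: "t \<in> fst (sections_ds (dual (Lambda (base E))))"
begin

abbreviation "Lambda1 \<equiv> Lambda (base E)"

lemma vpb: "is_vpb E"
  using fin_dim unfolding fin_dim_vpb_def by blast

lemma fibre_fin_dim: "x \<in> fst (base E) \<Longrightarrow> fin_dim (fibre E x) (vadd E) (vsmul E) (vzero E x)"
  using fin_dim unfolding fin_dim_vpb_def by blast

lemma t_smooth: "dsmooth (base E) (dual_ds Lambda1) t"
  using t unfolding sections_ds_simps smooth_maps_iff by (simp add: dual_simps Lambda_simps)

lemma fst_t: "x \<in> fst (base E) \<Longrightarrow> fst (t x) = x"
  using t unfolding sections_ds_simps by (simp add: dual_simps Lambda_simps)

lemma t_linear: "x \<in> fst (base E) \<Longrightarrow> fib_linear Lambda1 x (snd (t x))"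
  using dsmoothD(1)[OF t_smooth] fst_t unfolding dual_ds_def dual_carrier_def by fastforce

lemma tevalId_tclass:
  assumes x: "x \<in> fst (base E)" and zs: "zs \<in> tclass Lambda1 E x ys"
    and ys: "\<forall>lv\<in>set ys. snd lv \<in> fibre E x"
  shows "tevalId E t (x, tclass Lambda1 E x ys) = contract E (snd (t x)) x ys"
  unfolding tevalId_eq_contract using rep_tclass[OF zs]
  by (simp add: contract_tclass[OF is_vpbD(4)[OF vpb x] fibre_fin_dim[OF x] t_linear[OF x] ys])

lemma tevalId_fibre:
  assumes x: "x \<in> fst (base E)" and c: "c \<in> fibre (tensor_pre Lambda1 E P) x"
  shows "tevalId E t c = contract E (snd (t x)) x (rep (snd c))"
  using fibre_tensor_preD[OF c] unfolding tevalId_eq_contract by simp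

lemma tevalId_in_fibre:
  assumes x: "x \<in> fst (base E)" and c: "c \<in> fibre (tensor_pre Lambda1 E P) x"
  shows "tevalId E t c \<in> fibre E x"
  unfolding tevalId_fibre[OF x c]
  by (rule contract_in_fibre[OF is_vpbD(4)[OF vpb x]]) (use fibre_tensor_preD(2)[OF c] in auto)

lemma tevalId_add:
  assumes x: "x \<in> fst (base E)"
    and c: "c \<in> fibre (tensor_pre Lambda1 E P) x" and d: "d \<in> fibre (tensor_pre Lambda1 E P) x"
  shows "tevalId E t (vadd (tensor_pre Lambda1 E P) c d) = vadd E (tevalId E t c) (tevalId E t d)"
proof -
  note c' = fibre_tensor_preD[OF c] and d' = fibre_tensor_preD[OF d]
  let ?ys = "rep (snd c) @ rep (snd d)"
  have ys: "set ?ys \<subseteq> fibre Lambda1 x \<times> fibre E x" using c'(2) d'(2) by simp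
  have "tevalId E t (x, tclass Lambda1 E x ?ys) = contract E (snd (t x)) x ?ys"
    by (rule tevalId_tclass[OF x tclass_self[OF ys]]) (use ys in auto)
  then have "tevalId E t (vadd (tensor_pre Lambda1 E P) c d) = contract E (snd (t x)) x ?ys"
    using c'(1) by (simp add: tensor_pre_simps)
  also have "\<dots> = vadd E (contract E (snd (t x)) x (rep (snd c))) (contract E (snd (t x)) x (rep (snd d)))"
    by (rule contract_append[OF is_vpbD(4)[OF vpb x]]) (use c'(2) d'(2) in auto)
  finally show ?thesis unfolding tevalId_fibre[OF x c] tevalId_fibre[OF x d] .
qed

lemma tevalId_scale:
  assumes x: "x \<in> fst (base E)" and c: "c \<in> fibre (tensor_pre Lambda1 E P) x"
  shows "tevalId E t (vsmul (tensor_pre Lambda1 E P) r c) = vsmul E r (tevalId E t c)"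
proof -
  note c' = fibre_tensor_preD[OF c]
  let ?ys = "map (\<lambda>lv. (vsmul Lambda1 r (fst lv), snd lv)) (rep (snd c))"
  let ?zs = "map (\<lambda>lv. (fst lv, vsmul E r (snd lv))) (rep (snd c))"
  text \<open>The left-scaled representative need not lie in \<open>\<Lambda>\<^sup>1(X)\<close>'s fibres (no vector
    structure of \<open>\<Lambda>\<^sup>1(X)\<close> is used), but its class contains the right-scaled one.\<close>
  have "set ?zs \<subseteq> fibre Lambda1 x \<times> fibre E x"
    using c'(2) vspaceD(3)[OF is_vpbD(4)[OF vpb x]] by auto
  then have "?zs \<in> tclass Lambda1 E x ?ys"
    unfolding tclass_scale_left_right[OF c'(2), of r] by (rule tclass_self)
  then have "tevalId E t (x, tclass Lambda1 E x ?ys) = contract E (snd (t x)) x ?ys"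
    by (rule tevalId_tclass[OF x]) (use c'(2) in auto)
  then have "tevalId E t (vsmul (tensor_pre Lambda1 E P) r c) = contract E (snd (t x)) x ?ys"
    using c'(1) by (simp add: tensor_pre_simps)
  also have "\<dots> = vsmul E r (tevalId E t c)"
    unfolding tevalId_fibre[OF x c]
    by (rule contract_scale_left[OF is_vpbD(4)[OF vpb x] t_linear[OF x]]) (use c'(2) in auto)
  finally show ?thesis .
qed

lemma tevalId_zero: "x \<in> fst (base E) \<Longrightarrow> tevalId E t (vzero (tensor_pre Lambda1 E P) x) = vzero E x"
  using tevalId_tclass[OF _ tclass_self, of x "[]"] by (simp add: tensor_pre_simps)

lemma tevalId_tmap:
  assumes x: "x \<in> fst (base E)" and l: "l \<in> fibre Lambda1 x" and v: "v \<in> fibre E x"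
  shows "tevalId E t (tmap Lambda1 E (l, v)) = vsmul E (snd (t x) l) v"
proof -
  have "proj Lambda1 l = x" using l unfolding fibre_def by simp
  then have "tevalId E t (tmap Lambda1 E (l, v)) = contract E (snd (t x)) x [(l, v)]"
    using tevalId_tclass[OF x tclass_self, of "[(l, v)]"] l v by (simp add: tmap_def)
  also have "\<dots> = vsmul E (snd (t x) l) v"
    using vspace_add_zero_right[OF is_vpbD(4)[OF vpb x] vspaceD(3)[OF is_vpbD(4)[OF vpb x] v]] by simp
  finally show ?thesis .
qed

lemma tcarrier_fibre:
  assumes "c \<in> tcarrier Lambda1 E"
  shows "fst c \<in> fst (base E)" "c \<in> fibre (tensor_pre Lambda1 E P) (fst c)"
  using assms unfolding fibre_tensor_pre tcarrier_def by (auto simp: Lambda_simps)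

abbreviation "pullback_plots \<equiv> snd (pullback_ds (tcarrier Lambda1 E) (tevalId E t) (total E))"

lemma vpb_pullback_tensor: "vpb_pullback E (tensor_pre Lambda1 E pullback_plots) (tcarrier Lambda1 E) (tevalId E t)"
proof
  show "is_vpb E" by (rule vpb)
  show "base (tensor_pre Lambda1 E pullback_plots) = base E" by (simp add: tensor_pre_simps Lambda_simps)
  show "total (tensor_pre Lambda1 E pullback_plots) = pullback_ds (tcarrier Lambda1 E) (tevalId E t) (total E)"
    by (simp add: tensor_pre_simps pullback_ds_def)
  fix c assume "c \<in> tcarrier Lambda1 E"
  then have "tevalId E t c \<in> fibre E (fst c)" using tevalId_in_fibre tcarrier_fibre by blast
  then show "tevalId E t c \<in> fst (total E)" "proj (tensor_pre Lambda1 E pullback_plots) c = proj E (tevalId E t c)"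
    unfolding fibre_def by (simp_all add: tensor_pre_simps)
next
  fix x assume x: "x \<in> fst (base E)"
  show "vspace (fibre (tensor_pre Lambda1 E pullback_plots) x) (vadd (tensor_pre Lambda1 E pullback_plots))
      (vsmul (tensor_pre Lambda1 E pullback_plots)) (vzero (tensor_pre Lambda1 E pullback_plots) x)"
    by (rule tensor_pre_vspace) (simp_all add: x Lambda_simps is_vpbD(4)[OF vpb])
qed (fact tevalId_add tevalId_scale tevalId_zero)+

lemma smooth_tmap: "dsmooth (fibred_prod Lambda1 E) (total (tensor_pre Lambda1 E pullback_plots)) (tmap Lambda1 E)"
  unfolding dsmooth_def
proof (intro conjI allI impI)
  have in_fibres: "fst lv \<in> fibre Lambda1 (proj E (snd lv))" "snd lv \<in> fibre E (proj E (snd lv))"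
    "proj E (snd lv) \<in> fst (base E)" if "lv \<in> fst (fibred_prod Lambda1 E)" for lv
    using that dsmoothD(1)[OF is_vpbD(3)[OF vpb]] unfolding fibred_prod_simps fibre_def by auto
  have tmap_in: "tmap Lambda1 E lv \<in> tcarrier Lambda1 E" if "lv \<in> fst (fibred_prod Lambda1 E)" for lv
  proof (cases lv)
    case (Pair l v)
    then show ?thesis
      using tmap_in_fibre[of "proj E v" Lambda1 l v E pullback_plots] in_fibres[of "(l, v)"] that
      unfolding fibre_tensor_pre by (simp add: Lambda_simps)
  qed
  then show "tmap Lambda1 E ` fst (fibred_prod Lambda1 E) \<subseteq> fst (total (tensor_pre Lambda1 E pullback_plots))"
    by (auto simp: tensor_pre_simps)
  fix n U r assume r: "snd (fibred_prod Lambda1 E) n U r"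
  have r_in: "r u \<in> fst (fibred_prod Lambda1 E)" if "u \<in> U" for u
  proof -
    have "fst (r u) \<in> fst (total Lambda1)"
      using r that unfolding fibred_prod_simps Lambda_simps Lambda_ds_def by auto
    moreover have "snd (r u) \<in> fst (total E)"
      using r that diffeologicalD(2)[OF is_vpbD(2)[OF vpb], of n U "snd \<circ> r"]
      unfolding fibred_prod_simps by auto
    moreover have "proj Lambda1 (fst (r u)) = proj E (snd (r u))"
      using r that unfolding fibred_prod_simps by auto
    ultimately show ?thesis unfolding fibred_prod_simps by (cases "r u") simp
  qed
  have "snd (dual_ds Lambda1) n U (t \<circ> (proj E \<circ> (snd \<circ> r)))"
    using r dsmoothD(2)[OF t_smooth dsmoothD(2)[OF is_vpbD(3)[OF vpb]]] unfolding fibred_prod_simps by blast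
  moreover have "snd (total Lambda1) n U (fst \<circ> r)" using r unfolding fibred_prod_simps by blast
  moreover have "fst ((t \<circ> (proj E \<circ> (snd \<circ> r))) u) = proj Lambda1 ((fst \<circ> r) u)" if "u \<in> U" for u
    using fst_t in_fibres(3)[OF r_in[OF that]] r that unfolding fibred_prod_simps by auto
  ultimately obtain g where g: "smooth_fun n U g"
      "\<And>u. u \<in> U \<Longrightarrow> g u = snd (t (proj E (snd (r u)))) (fst (r u))"
    by (rule dual_plot_eval_smooth) auto
  have dom: "domain n U"
    using r diffeologicalD(1)[OF is_vpbD(2)[OF vpb]] unfolding fibred_prod_simps by blast
  have "snd (prod_ds real_ds (total E)) n U (\<lambda>u. (g u, snd (r u)))"
    using r g(1) dom unfolding prod_ds_simps fibred_prod_simps real_ds_def by (simp add: o_def)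
  then have "snd (total E) n U ((\<lambda>av. vsmul E (fst av) (snd av)) \<circ> (\<lambda>u. (g u, snd (r u))))"
    by (rule dsmoothD(2)[OF is_vpbD(6)[OF vpb]])
  then have "snd (total E) n U (tevalId E t \<circ> (tmap Lambda1 E \<circ> r))"
  proof (rule plot_cong[OF is_vpbD(2)[OF vpb]])
    fix u assume u: "u \<in> U"
    show "((\<lambda>av. vsmul E (fst av) (snd av)) \<circ> (\<lambda>u. (g u, snd (r u)))) u = (tevalId E t \<circ> (tmap Lambda1 E \<circ> r)) u"
      using tevalId_tmap[OF in_fibres(3,1,2)[OF r_in[OF u]]] g(2)[OF u] by (simp add: tmap_def)
  qed
  moreover have "(tmap Lambda1 E \<circ> r) ` U \<subseteq> tcarrier Lambda1 E"
  proof (rule image_subsetI)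
    fix u assume "u \<in> U"
    then show "(tmap Lambda1 E \<circ> r) u \<in> tcarrier Lambda1 E" unfolding comp_apply by (rule tmap_in[OF r_in])
  qed
  ultimately show "snd (total (tensor_pre Lambda1 E pullback_plots)) n U (tmap Lambda1 E \<circ> r)"
    unfolding vpb_pullback.total_plot_iff[OF vpb_pullback_tensor] using dom by blast
qed

lemma dsmooth_tevalId: "dsmooth (total (tensor Lambda1 E)) (total E) (tevalId E t)"
  unfolding dsmooth_def
proof (intro conjI allI impI)
  show "tevalId E t ` fst (total (tensor Lambda1 E)) \<subseteq> fst (total E)"
    using vpb_pullback.\<Phi>_in[OF vpb_pullback_tensor] by (auto simp: tensor_simps)
  fix n U p assume "snd (total (tensor Lambda1 E)) n U p"
  then have "pullback_plots n U p"
    using tensor_plotD vpb_pullback.is_vpb[OF vpb_pullback_tensor] smooth_tmap by blast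
  then show "snd (total E) n U (tevalId E t \<circ> p)" by (simp add: pullback_ds_def)
qed

lemma dsmooth_cov_deriv:
  assumes "connection E nabla"
  shows "dsmooth (sections_ds E) (sections_ds E) (cov_deriv E nabla t)"
proof -
  have "dsmooth (sections_ds E) (sections_ds (tensor Lambda1 E)) nabla"
    using assms unfolding connection_def Let_def by blast
  moreover have "dsmooth (sections_ds (tensor Lambda1 E)) (sections_ds E)
      (\<lambda>s. \<lambda>x\<in>fst (base E). tevalId E t (s x))"
  proof (rule dsmooth_sections_postcompose[OF is_vpbD(1,2)[OF vpb] _ dsmooth_tevalId])
    show "base (tensor Lambda1 E) = base E" by (simp add: tensor_simps Lambda_simps)
    fix c assume "c \<in> fst (total (tensor Lambda1 E))"
    then show "proj E (tevalId E t c) = proj (tensor Lambda1 E) c"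
      using vpb_pullback.proj_eq[OF vpb_pullback_tensor, of c]
      by (simp add: tensor_simps tensor_pre_simps)
  qed
  ultimately show ?thesis
    using dsmooth_comp unfolding cov_deriv_def comp_def by blast
qed

end

theorem theorem3p4:
  fixes E :: "('a, 'v) vpb"
    and nabla :: "('a \<Rightarrow> 'v) \<Rightarrow> ('a \<Rightarrow> ('a, 'v) lt)"
    and t :: "'a \<Rightarrow> 'a \<times> ('a \<times> 'a form set \<Rightarrow> real)"
  assumes "fin_dim_vpb E"
    and "connection E nabla"
    and "t \<in> fst (sections_ds (dual (Lambda (base E))))"
  shows "dsmooth (sections_ds E) (sections_ds E) (cov_deriv E nabla t)"
proof -
  interpret contraction E t using assms(1,3) by unfold_locales
  show ?thesis using assms(2) by (rule dsmooth_cov_deriv)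
qed

end
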